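(* For $\mu\in M(\mathbb{T})$: $\mu$ is spectrally reasonable if and only if $T_{m}\mu$ is spectrally reasonable for every $m\in\mathbb{Z}$.
   Context: $\mathbb{T}=\mathbb{R}/2\pi\mathbb{Z}$; $M(\mathbb{T})$ is the convolution Banach algebra of complex regular Borel measures on $\mathbb{T}$; $\sigma(\mu)$ is the spectrum in $M(\mathbb{T})$, $\widehat{\mu}(n)=\int e^{-int}d\mu(t)$. $\mathscr{N}$ is the set of $\mu$ with $\sigma(\mu)=\overline{\{\widehat{\mu}(n):n\in\mathbb{Z}\}}$; $\mu$ is spectrally reasonable if $\mu+\nu\in\mathscr{N}$ for every $\nu\in\mathscr{N}$. For $m\in\mathbb{Z}$, $T_m:M(\mathbb{T})\to M(\mathbb{T})$ is defined by $d(T_m\mu)(t)=e^{imt}d\mu(t)$, equivalently $\widehat{T_m\mu}(n)=\widehat{\mu}(n-m)$ for all $n\in\mathbb{Z}$. *)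

theory Defs
  imports "HOL-Analysis.Analysis"
begin

text \<open>The circle T = R/2piZ is modelled by the fundamental domain TT = [0, 2pi),
  with addition modulo 2pi given by tor.  A complex (regular) Borel measure on T is a
  complex-valued countably additive set function on the Borel subsets of TT
  (extended by 0 outside this sigma-algebra).  On the compact metric space T every
  finite Borel measure is regular, so regularity is automatic.\<close>

definition TT :: "real set" where
  "TT = {0..<2*pi}"

definition tor :: "real \<Rightarrow> real" where
  "tor x = x - 2*pi * of_int \<lfloor>x / (2*pi)\<rfloor>"

definition bsetT :: "real set \<Rightarrow> bool" where
  "bsetT E \<longleftrightarrow> E \<in> sets borel \<and> E \<subseteq> TT"

definition cmeas :: "(real set \<Rightarrow> complex) \<Rightarrow> bool" where
  "cmeas \<mu> \<longleftrightarrow> (\<forall>E. \<not> bsetT E \<longrightarrow> \<mu> E = 0) \<and>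
     (\<forall>A :: nat \<Rightarrow> real set. (\<forall>n. bsetT (A n)) \<longrightarrow> disjoint_family A \<longrightarrow>
        (\<lambda>n. \<mu> (A n)) sums \<mu> (\<Union>n. A n))"

text \<open>A representation d mu = h d M with M a finite positive Borel measure on T and
  h in L^1(M) (e.g. M = |mu|, h = d mu / d|mu|), used to define integration against mu.\<close>
definition crep :: "real measure \<Rightarrow> (real \<Rightarrow> complex) \<Rightarrow> (real set \<Rightarrow> complex) \<Rightarrow> bool" where
  "crep M h \<mu> \<longleftrightarrow> sets M = sets borel \<and> finite_measure M \<and> emeasure M (- TT) = 0 \<and>
     integrable M h \<and>
     (\<forall>E. \<mu> E = (if bsetT E then (LINT t:E|M. h t) else 0))"

definition cint :: "(real set \<Rightarrow> complex) \<Rightarrow> (real \<Rightarrow> complex) \<Rightarrow> complex" where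
  "cint \<mu> f = (SOME v. \<exists>M h. crep M h \<mu> \<and> v = (LINT t|M. f t * h t))"

definition conv :: "(real set \<Rightarrow> complex) \<Rightarrow> (real set \<Rightarrow> complex) \<Rightarrow> (real set \<Rightarrow> complex)" where
  "conv \<mu> \<nu> = (\<lambda>E. if bsetT E
      then cint \<nu> (\<lambda>t. \<mu> {s \<in> TT. tor (s + t) \<in> E}) else 0)"

definition delta0 :: "real set \<Rightarrow> complex" where
  "delta0 = (\<lambda>E. if bsetT E \<and> 0 \<in> E then 1 else 0)"

definition cinvertible :: "(real set \<Rightarrow> complex) \<Rightarrow> bool" where
  "cinvertible \<mu> \<longleftrightarrow> (\<exists>\<nu>. cmeas \<nu> \<and> conv \<mu> \<nu> = delta0 \<and> conv \<nu> \<mu> = delta0)"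

definition cspectrum :: "(real set \<Rightarrow> complex) \<Rightarrow> complex set" where
  "cspectrum \<mu> = {z. \<not> cinvertible (\<lambda>E. \<mu> E - z * delta0 E)}"

definition fourier :: "(real set \<Rightarrow> complex) \<Rightarrow> int \<Rightarrow> complex" where
  "fourier \<mu> n = cint \<mu> (\<lambda>t. exp (- \<i> * of_int n * of_real t))"

definition NN :: "(real set \<Rightarrow> complex) set" where
  "NN = {\<mu>. cmeas \<mu> \<and> cspectrum \<mu> = closure (range (fourier \<mu>))}"

definition spec_reasonable :: "(real set \<Rightarrow> complex) \<Rightarrow> bool" where
  "spec_reasonable \<mu> \<longleftrightarrow> cmeas \<mu> \<and> (\<forall>\<nu>\<in>NN. (\<lambda>E. \<mu> E + \<nu> E) \<in> NN)"

definition Tshift :: "int \<Rightarrow> (real set \<Rightarrow> complex) \<Rightarrow> (real set \<Rightarrow> complex)" where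
  "Tshift m \<mu> = (\<lambda>E. if bsetT E
      then cint \<mu> (\<lambda>t. indicator E t * exp (\<i> * of_int m * of_real t)) else 0)"

end

theory Submission
  imports Defs "HOL-Probability.Giry_Monad"
begin

text \<open>Multiplying a measure by the character \<open>e\<^sub>m(t) = exp(imt)\<close> is multiplicative for
  convolution, since \<open>e\<^sub>m(s + t) = e\<^sub>m(s) e\<^sub>m(t)\<close> and \<open>e\<^sub>m\<close> is \<open>2\<pi>\<close>-periodic, and it fixes
  \<open>\<delta>\<^sub>0\<close>.  Hence \<open>T\<^sub>m\<close> is a unital algebra automorphism of \<open>M(T)\<close> with inverse \<open>T\<^sub>-\<^sub>m\<close>, so
  it preserves spectra, while it merely shifts the Fourier coefficients:
  the coefficient of \<open>T\<^sub>m \<mu>\<close> at \<open>n\<close> is that of \<open>\<mu>\<close> at \<open>n - m\<close>.  So \<open>T\<^sub>m\<close> maps \<open>N\<close> onto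
  itself and, being additive, transports spectral reasonableness; the converse is \<open>m = 0\<close>.

  To compute with the integrals in the definitions, a countably additive complex set function
  is written as \<open>h dM\<close> with \<open>M\<close> a finite measure (Hahn and Jordan decompositions and
  Radon--Nikodym).  Integrals of bounded Borel functions against \<open>h dM\<close> do not depend on the
  representation, because bounded linear functionals are determined by their values on
  indicators.\<close>

section \<open>Bounded Borel functions\<close>

definition bounded_borel :: "(real \<Rightarrow> complex) \<Rightarrow> bool" where
  "bounded_borel f \<longleftrightarrow> f \<in> borel_measurable borel \<and> (\<exists>C. \<forall>x. norm (f x) \<le> C)"

lemma bounded_borel_add: "bounded_borel f \<Longrightarrow> bounded_borel g \<Longrightarrow> bounded_borel (\<lambda>x. f x + g x)"
  unfolding bounded_borel_def by (auto intro!: exI norm_triangle_le add_mono)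

lemma bounded_borel_cmult: "bounded_borel f \<Longrightarrow> bounded_borel (\<lambda>x. c * f x)"
  unfolding bounded_borel_def by (auto simp: norm_mult intro!: exI mult_left_mono)

lemma bounded_borel_mult: "bounded_borel f \<Longrightarrow> bounded_borel g \<Longrightarrow> bounded_borel (\<lambda>x. f x * g x)"
proof -
  assume "bounded_borel f" "bounded_borel g"
  then obtain C D where "\<And>x. norm (f x) \<le> C" "\<And>x. norm (g x) \<le> D"
    and "f \<in> borel_measurable borel" "g \<in> borel_measurable borel"
    unfolding bounded_borel_def by blast
  moreover from this have "C \<ge> 0" by (meson norm_ge_zero order_trans)
  ultimately show ?thesis
    unfolding bounded_borel_def norm_mult by (auto intro!: exI[of _ "C * D"] mult_mono)
qed

lemma bounded_borel_indicator: "A \<in> sets borel \<Longrightarrow> bounded_borel (indicator A)"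
  unfolding bounded_borel_def by (auto intro!: exI[of _ 1] simp: indicator_def)

lemma floor_approx_error:
  fixes N y :: real
  assumes "N > 0"
  shows "\<bar>y - of_int \<lfloor>N * y\<rfloor> / N\<bar> \<le> 1 / N"
proof -
  have "of_int \<lfloor>N * y\<rfloor> \<le> N * y" "N * y < of_int \<lfloor>N * y\<rfloor> + 1" by linarith+
  then have "of_int \<lfloor>N * y\<rfloor> / N \<le> y" "y < (of_int \<lfloor>N * y\<rfloor> + 1) / N"
    using assms by (simp_all add: divide_simps mult.commute)
  then show ?thesis by (simp add: add_divide_distrib)
qed

lemma bounded_borel_finite_range_approx:
  fixes N :: real
  assumes f: "bounded_borel f" and N: "N > 0"
  obtains g S where "finite S" "\<And>x. g x \<in> S" "g \<in> borel_measurable borel"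
    "\<And>x. norm (f x - g x) \<le> 2 / N"
proof -
  obtain C where C: "\<And>x. norm (f x) \<le> C" and fm: "f \<in> borel_measurable borel"
    using f unfolding bounded_borel_def by auto
  define g where "g x = (of_int \<lfloor>N * Re (f x)\<rfloor> + \<i> * of_int \<lfloor>N * Im (f x)\<rfloor>) / complex_of_real N"
    for x
  define I where "I = {-\<lceil>N*C\<rceil>-1..\<lceil>N*C\<rceil>+1}"
  define S where "S = (\<lambda>(a,b). (of_int a + \<i> * of_int b) / complex_of_real N) ` (I \<times> I)"
  have floor_in_I: "\<lfloor>y\<rfloor> \<in> I" if "\<bar>y\<bar> \<le> N * C" for y :: real
  proof -
    have "\<lfloor>y\<rfloor> \<le> \<lceil>N*C\<rceil>" using that by (meson abs_le_D1 floor_le_ceiling floor_mono order_trans)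
    moreover have "-\<lceil>N*C\<rceil> - 1 \<le> \<lfloor>y\<rfloor>" using that by linarith
    ultimately show ?thesis unfolding I_def by simp
  qed
  have "g x \<in> S" and "norm (f x - g x) \<le> 2 / N" for x
  proof -
    have "\<bar>Re (f x)\<bar> \<le> C" "\<bar>Im (f x)\<bar> \<le> C"
      using C[of x] abs_Re_le_cmod abs_Im_le_cmod order_trans by blast+
    then have "\<bar>N * Re (f x)\<bar> \<le> N * C" "\<bar>N * Im (f x)\<bar> \<le> N * C"
      using N by (auto simp: abs_mult intro: mult_left_mono)
    then show "g x \<in> S"
      unfolding g_def S_def using floor_in_I
      by (intro image_eqI[of _ _ "(\<lfloor>N * Re (f x)\<rfloor>, \<lfloor>N * Im (f x)\<rfloor>)"]) auto
    have "Re (g x) = of_int \<lfloor>N * Re (f x)\<rfloor> / N" "Im (g x) = of_int \<lfloor>N * Im (f x)\<rfloor> / N"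
      unfolding g_def using N by (simp_all add: Re_divide_of_real Im_divide_of_real)
    then have "\<bar>Re (f x - g x)\<bar> \<le> 1 / N" "\<bar>Im (f x - g x)\<bar> \<le> 1 / N"
      using floor_approx_error[OF N] by simp_all
    then show "norm (f x - g x) \<le> 2 / N"
      using cmod_le[of "f x - g x"] by simp
  qed
  moreover have "finite S" unfolding S_def I_def by simp
  moreover have "g \<in> borel_measurable borel" unfolding g_def using fm by measurable
  ultimately show ?thesis using that by blast
qed

lemma le_0_if_le_div_all_pos:
  fixes a K :: real
  assumes "\<And>N. N > 0 \<Longrightarrow> a \<le> K / N"
  shows "a \<le> 0"
proof (rule ccontr)
  assume "\<not> a \<le> 0"
  then have a: "a > 0" by simp
  define N where "N = (\<bar>K\<bar> + 1) / a"
  have N: "N > 0" using a by (simp add: N_def add_pos_nonneg)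
  have "K / N = K * a / (\<bar>K\<bar> + 1)" unfolding N_def using a by simp
  also have "\<dots> < a" using a by (simp add: divide_less_eq) (smt (verit) mult_right_mono abs_ge_self)
  finally show False using assms[OF N] by simp
qed

lemma functional_eq_0_if_vanishes_on_indicators:
  fixes \<Phi> :: "(real \<Rightarrow> complex) \<Rightarrow> complex"
  assumes add: "\<And>f g. bounded_borel f \<Longrightarrow> bounded_borel g \<Longrightarrow> \<Phi> (\<lambda>x. f x + g x) = \<Phi> f + \<Phi> g"
    and cmult: "\<And>c f. bounded_borel f \<Longrightarrow> \<Phi> (\<lambda>x. c * f x) = c * \<Phi> f"
    and vanish: "\<And>A. A \<in> sets borel \<Longrightarrow> \<Phi> (indicator A) = 0"
    and bound: "\<And>f C. bounded_borel f \<Longrightarrow> (\<forall>x. norm (f x) \<le> C) \<Longrightarrow> norm (\<Phi> f) \<le> K * C"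
    and f: "bounded_borel f"
  shows "\<Phi> f = 0"
proof -
  have simple: "\<Phi> (\<lambda>x. \<Sum>c\<in>S. c * indicator (A c) x) = 0 \<and> bounded_borel (\<lambda>x. \<Sum>c\<in>S. c
      * indicator (A c) x)"
    if "finite S" "\<And>c. A c \<in> sets borel" for S A
    using that(1)
  proof (induction S rule: finite_induct)
    case empty
    have "bounded_borel (\<lambda>x. 0)" by (auto simp add: bounded_borel_def)
    then show ?case using cmult[of "\<lambda>x. 0" 0] by simp
  next
    case (insert c S)
    have Ac: "bounded_borel (\<lambda>x. c * indicator (A c) x)"
      by (rule bounded_borel_cmult[OF bounded_borel_indicator[OF that(2)]])
    have "\<Phi> (\<lambda>x. c * indicator (A c) x) = 0"
      using cmult[OF bounded_borel_indicator[OF that(2)], of c] vanish[OF that(2)] by simp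
    moreover have eq: "(\<lambda>x. \<Sum>c\<in>insert c S. c * indicator (A c) x)
        = (\<lambda>x. c * indicator (A c) x + (\<Sum>c\<in>S. c * indicator (A c) x))"
      by (rule ext, rule sum.insert[OF insert(1,2)])
    ultimately show ?case unfolding eq
      using insert(3) add[OF Ac, of "\<lambda>x. \<Sum>c\<in>S. c * indicator (A c) x"] bounded_borel_add[OF Ac]
      by auto
  qed
  have small: "norm (\<Phi> f) \<le> K * (2 / N)" if N: "N > 0" for N :: real
  proof -
    obtain S g where S: "finite S" "\<And>x. g x \<in> S" and gm: "g \<in> borel_measurable borel"
      and close: "\<And>x. norm (f x - g x) \<le> 2 / N"
      using bounded_borel_finite_range_approx[OF f N] by metis
    have g_eq: "g = (\<lambda>x. \<Sum>c\<in>S. c * indicator (g -` {c}) x)"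
    proof
      fix x
      have "(\<Sum>c\<in>S. c * indicator (g -` {c}) x) = (\<Sum>c\<in>S. if g x = c then c else 0)"
        by (intro sum.cong refl) (simp add: indicator_def)
      then show "g x = (\<Sum>c\<in>S. c * indicator (g -` {c}) x)" using S by (simp add: sum.delta)
    qed
    have "g -` {c} \<in> sets borel" for c
      using measurable_sets_borel[OF gm borel_closed[OF closed_singleton]] by simp
    then have g0: "\<Phi> g = 0" and g: "bounded_borel g"
      using simple[OF S(1), of "\<lambda>c. g -` {c}"] unfolding g_eq[symmetric] by auto
    have d: "bounded_borel (\<lambda>x. f x + (-1) * g x)"
      by (rule bounded_borel_add[OF f bounded_borel_cmult[OF g]])
    have "\<Phi> f = \<Phi> (\<lambda>x. (f x + (-1) * g x) + g x)" by simp
    also have "\<dots> = \<Phi> (\<lambda>x. f x + (-1) * g x)" using add[OF d g] g0 by simp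
    moreover have "\<forall>x. norm (f x + (-1) * g x) \<le> 2 / N" using close by simp
    ultimately show ?thesis using bound[OF d, of "2/N"] by simp
  qed
  have "norm (\<Phi> f) \<le> 0"
    using small by (intro le_0_if_le_div_all_pos[where K = "K * 2"]) simp
  then show ?thesis by simp
qed

section \<open>Integrals against a representation \<open>h dM\<close>\<close>

lemma bsetT_Un: "bsetT A \<Longrightarrow> bsetT B \<Longrightarrow> bsetT (A \<union> B)" unfolding bsetT_def by auto
lemma bsetT_Int: "bsetT A \<Longrightarrow> B \<in> sets borel \<Longrightarrow> bsetT (A \<inter> B)" unfolding bsetT_def by auto
lemma bsetT_Diff: "bsetT A \<Longrightarrow> B \<in> sets borel \<Longrightarrow> bsetT (A - B)" unfolding bsetT_def by auto
lemma bsetT_borel: "bsetT A \<Longrightarrow> A \<in> sets borel" unfolding bsetT_def by auto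
lemma bsetT_empty: "bsetT {}" unfolding bsetT_def by auto
lemma TT_borel: "TT \<in> sets borel" unfolding TT_def by simp
lemma bsetT_TT: "bsetT TT" unfolding bsetT_def using TT_borel by auto
lemma bsetT_UN: "(\<And>n::nat. bsetT (A n)) \<Longrightarrow> bsetT (\<Union>n. A n)" unfolding bsetT_def by auto
lemma bsetT_INT: "(\<And>n::nat. bsetT (A n)) \<Longrightarrow> bsetT (\<Inter>n. A n)" unfolding bsetT_def by auto
lemma bsetT_sub: "bsetT A \<Longrightarrow> B \<in> sets borel \<Longrightarrow> B \<subseteq> A \<Longrightarrow> bsetT B" unfolding bsetT_def by auto

definition rep_integral :: "real measure \<Rightarrow> (real \<Rightarrow> complex) \<Rightarrow> (real \<Rightarrow> complex) \<Rightarrow> complex" where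
  "rep_integral M h f = (LINT t|M. f t * h t)"

lemma crep_space: "crep M h \<mu> \<Longrightarrow> space M = UNIV"
  unfolding crep_def by (metis sets_eq_imp_space_eq space_borel)

lemma crep_density_measurable: "crep M h \<mu> \<Longrightarrow> h \<in> borel_measurable borel"
  unfolding crep_def by (metis borel_measurable_integrable measurable_cong_sets)

lemma bounded_borel_measurable: "sets M = sets borel \<Longrightarrow> bounded_borel f \<Longrightarrow> f \<in> borel_measurable M"
  unfolding bounded_borel_def by (metis measurable_cong_sets)

lemma crep_integrable_mult:
  assumes r: "crep M h \<mu>" and f: "bounded_borel f"
  shows "integrable M (\<lambda>x. f x * h x)"
proof -
  obtain C where C: "\<And>x. norm (f x) \<le> C" using f unfolding bounded_borel_def by auto
  then have "C \<ge> 0" using norm_ge_zero order_trans by blast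
  have s: "sets M = sets borel" and i: "integrable M h" using r unfolding crep_def by auto
  show ?thesis
  proof (rule Bochner_Integration.integrable_bound[of M "\<lambda>x. complex_of_real C * h x"])
    show "integrable M (\<lambda>x. complex_of_real C * h x)" using i by simp
    show "(\<lambda>x. f x * h x) \<in> borel_measurable M"
      using bounded_borel_measurable[OF s f] borel_measurable_integrable[OF i] by measurable
    show "AE x in M. norm (f x * h x) \<le> norm (complex_of_real C * h x)"
      using C \<open>C \<ge> 0\<close> by (auto simp: norm_mult intro!: mult_right_mono)
  qed
qed

lemma rep_integral_norm_bound:
  assumes "crep M h \<mu>" "bounded_borel f" "\<And>x. norm (f x) \<le> C"
  shows "norm (rep_integral M h f) \<le> C * (LINT t|M. norm (h t))"
proof -
  have i: "integrable M h" using assms(1) unfolding crep_def by auto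
  have "norm (rep_integral M h f) \<le> (LINT t|M. norm (f t * h t))"
    unfolding rep_integral_def by (rule integral_norm_bound)
  also have "\<dots> \<le> (LINT t|M. C * norm (h t))"
    using integrable_norm[OF crep_integrable_mult[OF assms(1,2)]] i
    by (intro integral_mono) (auto simp: norm_mult intro!: mult_right_mono assms(3))
  also have "\<dots> = C * (LINT t|M. norm (h t))" by simp
  finally show ?thesis .
qed

lemma rep_integral_add:
  assumes "crep M h \<mu>" "bounded_borel f" "bounded_borel g"
  shows "rep_integral M h (\<lambda>x. f x + g x) = rep_integral M h f + rep_integral M h g"
  using crep_integrable_mult[OF assms(1,2)] crep_integrable_mult[OF assms(1,3)]
  unfolding rep_integral_def by (simp add: distrib_right)

lemma rep_integral_cmult:
  assumes "crep M h \<mu>"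
  shows "rep_integral M h (\<lambda>x. c * f x) = c * rep_integral M h f"
  unfolding rep_integral_def by (simp add: mult.assoc)

lemma rep_integral_indicator:
  assumes "crep M h \<mu>" "A \<in> sets borel"
  shows "rep_integral M h (indicator A) = \<mu> (A \<inter> TT)"
proof -
  have s: "sets M = sets borel" and n: "emeasure M (- TT) = 0"
    and e: "\<And>E. \<mu> E = (if bsetT E then (LINT t:E|M. h t) else 0)"
    using assms(1) unfolding crep_def by auto
  have b: "bsetT (A \<inter> TT)" unfolding bsetT_def using assms(2) TT_borel by auto
  have ae: "AE x in M. x \<in> TT"
    using n s TT_borel by (intro AE_I[of _ _ "- TT"]) (auto simp: crep_space[OF assms(1)])
  have hM: "h \<in> borel_measurable M" using assms(1) unfolding crep_def by auto
  have AM: "A \<in> sets M" "TT \<in> sets M" using s assms(2) TT_borel by auto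
  have "rep_integral M h (indicator A) = (LINT t|M. indicator (A \<inter> TT) t *\<^sub>R h t)"
    unfolding rep_integral_def
  proof (rule integral_cong_AE)
    show "(\<lambda>t. indicator A t * h t) \<in> borel_measurable M" using hM AM by measurable
    show "(\<lambda>t. indicator (A \<inter> TT) t *\<^sub>R h t) \<in> borel_measurable M" using hM AM by measurable
    show "AE x in M. indicator A x * h x = indicator (A \<inter> TT) x *\<^sub>R h x"
      using ae by eventually_elim (auto simp: indicator_def)
  qed
  also have "\<dots> = \<mu> (A \<inter> TT)" using e[of "A \<inter> TT"] b by (simp add: set_lebesgue_integral_def)
  finally show ?thesis .
qed

lemma rep_integral_linear_combination:
  assumes r1: "crep M1 h1 \<mu>1" and r2: "crep M2 h2 \<mu>2" and r3: "crep M3 h3 \<mu>3"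
    and lin: "\<And>E. \<mu>3 E = \<mu>1 E + c * \<mu>2 E" and f: "bounded_borel f"
  shows "rep_integral M3 h3 f = rep_integral M1 h1 f + c * rep_integral M2 h2 f"
proof -
  define \<Phi> where
    "\<Phi> f = rep_integral M3 h3 f - rep_integral M1 h1 f - c * rep_integral M2 h2 f" for f
  define N where "N M h = (LINT t|M. norm (h t :: complex))" for M :: "real measure" and h
  have "\<Phi> f = 0"
  proof (rule functional_eq_0_if_vanishes_on_indicators
      [where \<Phi> = \<Phi> and K = "N M3 h3 + N M1 h1 + norm c * N M2 h2"])
    fix f g assume "bounded_borel f" "bounded_borel g"
    then show "\<Phi> (\<lambda>x. f x + g x) = \<Phi> f + \<Phi> g"
      unfolding \<Phi>_def using rep_integral_add[OF r1] rep_integral_add[OF r2] rep_integral_add[OF r3]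
      by (simp add: algebra_simps)
  next
    fix c' f
    show "\<Phi> (\<lambda>x. c' * f x) = c' * \<Phi> f"
      unfolding \<Phi>_def using rep_integral_cmult[OF r1] rep_integral_cmult[OF r2]
        rep_integral_cmult[OF r3] by (simp add: algebra_simps)
  next
    fix A :: "real set" assume "A \<in> sets borel"
    then show "\<Phi> (indicator A) = 0"
      unfolding \<Phi>_def using rep_integral_indicator[OF r1] rep_integral_indicator[OF r2]
        rep_integral_indicator[OF r3] lin by simp
  next
    fix f C assume b: "bounded_borel f" "\<forall>x. norm (f x) \<le> C"
    have "norm (\<Phi> f) \<le> norm (rep_integral M3 h3 f) + norm (rep_integral M1 h1 f)
        + norm c * norm (rep_integral M2 h2 f)"
      unfolding \<Phi>_def norm_mult[symmetric]
      by (meson add_mono norm_triangle_ineq4 order_trans order_refl)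
    also have "\<dots> \<le> C * N M3 h3 + C * N M1 h1 + norm c * (C * N M2 h2)"
      unfolding N_def using rep_integral_norm_bound[OF r1 b(1)] rep_integral_norm_bound[OF r2 b(1)]
        rep_integral_norm_bound[OF r3 b(1)] b(2)
      by (intro add_mono mult_left_mono) auto
    finally show "norm (\<Phi> f) \<le> (N M3 h3 + N M1 h1 + norm c * N M2 h2) * C"
      by (simp add: algebra_simps)
  qed (fact f)
  then show ?thesis unfolding \<Phi>_def by (simp add: algebra_simps)
qed

text \<open>\<open>cint\<close> integrates against a representation chosen by Hilbert choice; by the previous
  lemma any representation gives the same value.\<close>

lemma cint_eq_rep_integral:
  assumes r: "crep M h \<mu>" and f: "bounded_borel f"
  shows "cint \<mu> f = rep_integral M h f"
proof -
  have "\<exists>v. \<exists>M h. crep M h \<mu> \<and> v = (LINT t|M. f t * h t)" using r by blast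
  then have "\<exists>M h. crep M h \<mu> \<and> cint \<mu> f = (LINT t|M. f t * h t)"
    unfolding cint_def by (rule someI_ex)
  then obtain M' h' where r': "crep M' h' \<mu>" and c: "cint \<mu> f = rep_integral M' h' f"
    unfolding rep_integral_def by blast
  have "rep_integral M' h' f = rep_integral M h f + 0 * rep_integral M h f"
    by (rule rep_integral_linear_combination[OF r r r' _ f]) simp
  then show ?thesis using c by simp
qed

lemma rep_integral_dominated_convergence:
  assumes r: "crep M h \<mu>" and fb: "\<And>n. bounded_borel (F n)" and f: "bounded_borel g"
    and lim: "\<And>x. (\<lambda>n. F n x) \<longlonglongrightarrow> g x" and bnd: "\<And>n x. norm (F n x) \<le> C"
  shows "(\<lambda>n. rep_integral M h (F n)) \<longlonglongrightarrow> rep_integral M h g"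
proof -
  have s: "sets M = sets borel" and i: "integrable M h" using r unfolding crep_def by auto
  have hm: "h \<in> borel_measurable M" using i by auto
  have Fm: "F n \<in> borel_measurable M" for n using bounded_borel_measurable[OF s fb] .
  have gm: "g \<in> borel_measurable M" using bounded_borel_measurable[OF s f] .
  show ?thesis unfolding rep_integral_def
  proof (rule integral_dominated_convergence[where w="\<lambda>x. C * norm (h x)"])
    show "(\<lambda>t. g t * h t) \<in> borel_measurable M" using gm hm by measurable
    show "(\<lambda>t. F n t * h t) \<in> borel_measurable M" for n using Fm hm by measurable
    show "integrable M (\<lambda>x. C * norm (h x))" using i by auto
    show "AE x in M. (\<lambda>n. F n x * h x) \<longlonglongrightarrow> g x * h x" using lim by (auto intro!: tendsto_mult)
    show "AE x in M. norm (F n x * h x) \<le> C * norm (h x)" for n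
      using bnd by (auto simp: norm_mult intro!: mult_right_mono)
  qed
qed

lemma rep_integral_sum:
  assumes r: "crep M h \<mu>" and "finite I" and "\<And>i. i \<in> I \<Longrightarrow> bounded_borel (f i)"
  shows "rep_integral M h (\<lambda>x. \<Sum>i\<in>I. f i x) = (\<Sum>i\<in>I. rep_integral M h (f i))"
  unfolding rep_integral_def using crep_integrable_mult[OF r assms(3)]
  by (simp add: sum_distrib_right integral_sum)

lemma indicator_UN_lessThan:
  fixes A :: "nat \<Rightarrow> 'a set"
  shows "disjoint_family A \<Longrightarrow> indicator (\<Union>i<n. A i) = (\<lambda>x. \<Sum>i<n. indicator (A i) x)"
  by (rule ext, rule indicator_UN_disjoint) (auto intro: disjoint_family_on_mono)

lemma crep_imp_cmeas:
  assumes r: "crep M h \<mu>"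
  shows "cmeas \<mu>"
  unfolding cmeas_def
proof (intro conjI allI impI)
  fix E assume "\<not> bsetT E" then show "\<mu> E = 0" using r unfolding crep_def by auto
next
  fix A :: "nat \<Rightarrow> real set" assume A: "\<forall>n. bsetT (A n)" and d: "disjoint_family A"
  have As: "A n \<in> sets borel" "A n \<subseteq> TT" for n using A unfolding bsetT_def by auto
  have U: "(\<Union>i<n. A i) \<in> sets borel" for n using As by auto
  have muA: "\<mu> (A i) = rep_integral M h (indicator (A i))" for i
    using rep_integral_indicator[OF r As(1)] As(2)[of i] by (simp add: Int_absorb2)
  have "(\<lambda>n. rep_integral M h (indicator (\<Union>i<n. A i))) \<longlonglongrightarrow> rep_integral M h (indicator (\<Union>n. A n))"
  proof (rule rep_integral_dominated_convergence[OF r, where C=1])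
    show "bounded_borel (indicator (\<Union>i<n. A i))" for n using bounded_borel_indicator[OF U] .
    show "bounded_borel (indicator (\<Union>n. A n))" using As by (intro bounded_borel_indicator) auto
    show "norm (indicator (\<Union>i<n. A i) x :: complex) \<le> 1" for n x by (simp add: indicator_def)
    fix x
    show "(\<lambda>n. indicator (\<Union>i<n. A i) x :: complex) \<longlonglongrightarrow> indicator (\<Union>n. A n) x"
    proof (cases "x \<in> (\<Union>n. A n)")
      case True
      then obtain k where k: "x \<in> A k" by auto
      have "\<forall>n\<ge>Suc k. (indicator (\<Union>i<n. A i) x :: complex) = indicator (\<Union>n. A n) x"
        using k True by (auto simp: indicator_def)
      then show ?thesis by (intro tendsto_eventually) (auto simp: eventually_sequentially)
    next
      case False then show ?thesis by (auto simp: indicator_def)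
    qed
  qed
  moreover have "rep_integral M h (indicator (\<Union>i<n. A i)) = (\<Sum>i<n. \<mu> (A i))" for n
  proof -
    have "rep_integral M h (indicator (\<Union>i<n. A i)) = rep_integral M h (\<lambda>x. \<Sum>i<n. indicator (A i) x)"
      unfolding indicator_UN_lessThan[OF d] ..
    also have "\<dots> = (\<Sum>i<n. rep_integral M h (indicator (A i)))"
      by (rule rep_integral_sum[OF r]) (auto intro: bounded_borel_indicator As)
    finally show ?thesis using muA by simp
  qed
  moreover have "\<mu> (\<Union>n. A n) = rep_integral M h (indicator (\<Union>n. A n))"
  proof -
    have "(\<Union>n. A n) \<inter> TT = (\<Union>n. A n)" using As(2) by blast
    then show ?thesis using rep_integral_indicator[OF r, of "\<Union>n. A n"] As(1) by auto
  qed
  ultimately show "(\<lambda>n. \<mu> (A n)) sums \<mu> (\<Union>n. A n)" unfolding sums_def by simp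
qed

section \<open>Real charges and the Hahn decomposition\<close>

locale real_charge =
  fixes \<rho> :: "real set \<Rightarrow> real"
  assumes charge_outside: "\<And>E. \<not> bsetT E \<Longrightarrow> \<rho> E = 0"
    and charge_countably_additive: "\<And>A. (\<And>n. bsetT (A n)) \<Longrightarrow> disjoint_family A
        \<Longrightarrow> (\<lambda>n. \<rho> (A n)) sums \<rho> (\<Union>n. A n)"
begin

lemma charge_empty: "\<rho> {} = 0"
proof -
  have "(\<lambda>n. \<rho> {}) sums \<rho> (\<Union>n::nat. {})"
    by (rule charge_countably_additive) (auto simp: bsetT_empty disjoint_family_on_def)
  then have "summable (\<lambda>n::nat. \<rho> {})" by (rule sums_summable)
  then have "(\<lambda>n::nat. \<rho> {}) \<longlonglongrightarrow> 0" by (rule summable_LIMSEQ_zero)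
  then show ?thesis by (simp add: LIMSEQ_const_iff)
qed

lemma charge_Un: assumes "bsetT A" "bsetT B" "A \<inter> B = {}" shows "\<rho> (A \<union> B) = \<rho> A + \<rho> B"
proof -
  define F where "F n = (if n = 0 then A else if n = 1 then B else {})" for n :: nat
  have "(\<lambda>n. \<rho> (F n)) sums \<rho> (\<Union>n. F n)"
    by (rule charge_countably_additive)
      (use assms in \<open>auto simp: F_def bsetT_empty disjoint_family_on_def\<close>)
  moreover have "(\<Union>n. F n) = A \<union> B" unfolding F_def by (auto split: if_splits)
  moreover have "(\<lambda>n. \<rho> (F n)) sums (\<Sum>n<2. \<rho> (F n))"
    by (rule sums_finite) (auto simp: F_def charge_empty)
  ultimately show ?thesis using sums_unique2 by (fastforce simp: F_def numeral_2_eq_2)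
qed

lemma charge_Diff: assumes "bsetT A" "bsetT B" "B \<subseteq> A" shows "\<rho> (A - B) = \<rho> A - \<rho> B"
proof -
  have "A = (A - B) \<union> B" using assms(3) by auto
  then have "\<rho> A = \<rho> (A - B) + \<rho> B" using charge_Un[of "A - B" B] assms bsetT_Diff bsetT_borel
    by (metis Diff_disjoint inf_commute)
  then show ?thesis by simp
qed

lemma charge_UN_lessThan:
  fixes n :: nat
  assumes "\<And>i. bsetT (A i)" "disjoint_family A"
  shows "\<rho> (\<Union>i<n. A i) = (\<Sum>i<n. \<rho> (A i))"
proof (induction n)
  case 0 then show ?case by (simp add: charge_empty)
next
  case (Suc n)
  have b: "bsetT (\<Union>i<n. A i)" using assms(1) unfolding bsetT_def by auto
  have d0: "i < n \<Longrightarrow> A n \<inter> A i = {}" for i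
    using assms(2)[unfolded disjoint_family_on_def, rule_format, of n i] by auto
  have d: "A n \<inter> (\<Union>i<n. A i) = {}" using d0 by blast
  have "(\<Union>i<Suc n. A i) = A n \<union> (\<Union>i<n. A i)" by (auto simp: lessThan_Suc)
  then show ?case using charge_Un[OF assms(1)[of n] b d] Suc by simp
qed

lemma charge_continuous_from_below:
  assumes B: "\<And>n. bsetT (B n)" and inc: "incseq B"
  shows "(\<lambda>n. \<rho> (B n)) \<longlonglongrightarrow> \<rho> (\<Union>n. B n)"
proof -
  have db: "bsetT (disjointed B n)" for n
  proof -
    have "(\<Union>i\<in>{0..<n}. B i) \<in> sets borel" using B bsetT_borel by auto
    then show ?thesis unfolding disjointed_def using bsetT_Diff[OF B] by auto
  qed
  have "(\<lambda>n. \<rho> (disjointed B n)) sums \<rho> (\<Union>n. disjointed B n)"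
    by (rule charge_countably_additive[OF db disjoint_family_disjointed])
  then have "(\<lambda>n. \<Sum>i<n. \<rho> (disjointed B i)) \<longlonglongrightarrow> \<rho> (\<Union>n. B n)"
    unfolding sums_def UN_disjointed_eq .
  moreover have "(\<Sum>i<Suc n. \<rho> (disjointed B i)) = \<rho> (B n)" for n
  proof -
    have "(\<Sum>i<Suc n. \<rho> (disjointed B i)) = \<rho> (\<Union>i<Suc n. disjointed B i)"
      using charge_UN_lessThan[OF db disjoint_family_disjointed] by simp
    also have "(\<Union>i<Suc n. disjointed B i) = (\<Union>i<Suc n. B i)"
      using finite_UN_disjointed_eq[of B "Suc n"] by (simp add: atLeast0LessThan)
    also have "\<dots> = B n" using inc by (auto simp: incseq_def lessThan_Suc_atMost)
    finally show ?thesis .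
  qed
  ultimately show ?thesis using LIMSEQ_Suc[of "\<lambda>n. \<Sum>i<n. \<rho> (disjointed B i)"] by simp
qed

lemma charge_continuous_from_above:
  assumes C: "\<And>n. bsetT (C n)" and dec: "decseq C"
  shows "(\<lambda>n. \<rho> (C n)) \<longlonglongrightarrow> \<rho> (\<Inter>n. C n)"
proof -
  define B where "B n = C 0 - C n" for n
  have Bb: "bsetT (B n)" for n unfolding B_def using C bsetT_Diff bsetT_borel by blast
  have inc: "incseq B" using dec unfolding B_def incseq_def decseq_def by auto
  have lim: "(\<lambda>n. \<rho> (B n)) \<longlonglongrightarrow> \<rho> (\<Union>n. B n)" by (rule charge_continuous_from_below[OF Bb inc])
  have U: "(\<Union>n. B n) = C 0 - (\<Inter>n. C n)" unfolding B_def by auto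
  have I: "(\<Inter>n. C n) \<subseteq> C 0" by auto
  have "\<rho> (B n) = \<rho> (C 0) - \<rho> (C n)" for n
    unfolding B_def using charge_Diff[OF C C] dec by (simp add: decseq_def)
  moreover have "\<rho> (\<Union>n. B n) = \<rho> (C 0) - \<rho> (\<Inter>n. C n)"
    unfolding U by (rule charge_Diff[OF C bsetT_INT[OF C] I])
  ultimately have "(\<lambda>n. \<rho> (C 0) - \<rho> (C n)) \<longlonglongrightarrow> \<rho> (C 0) - \<rho> (\<Inter>n. C n)" using lim by simp
  from tendsto_diff[OF tendsto_const[of "\<rho> (C 0)"] this] show ?thesis by simp
qed

definition charge_unbounded_on :: "real set \<Rightarrow> bool" where
  "charge_unbounded_on E \<longleftrightarrow> bsetT E \<and> (\<forall>b. \<exists>F. bsetT F \<and> F \<subseteq> E \<and> \<bar>\<rho> F\<bar> > b)"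

lemma charge_unbounded_on_split:
  assumes "charge_unbounded_on E"
  shows "\<exists>A E'. bsetT A \<and> charge_unbounded_on E' \<and> A \<subseteq> E \<and> E' \<subseteq> E \<and> A \<inter> E' = {} \<and> \<bar>\<rho> A\<bar> \<ge> 1"
proof -
  have E: "bsetT E" using assms unfolding charge_unbounded_on_def by auto
  obtain F where F: "bsetT F" "F \<subseteq> E" "\<bar>\<rho> F\<bar> > \<bar>\<rho> E\<bar> + 1" using assms
    unfolding charge_unbounded_on_def by blast
  define G where "G = E - F"
  have G: "bsetT G" unfolding G_def using bsetT_Diff[OF E bsetT_borel[OF F(1)]] .
  have "\<rho> G = \<rho> E - \<rho> F" unfolding G_def by (rule charge_Diff[OF E F(1,2)])
  then have G1: "\<bar>\<rho> G\<bar> \<ge> 1" using F(3) by linarith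
  have F1: "\<bar>\<rho> F\<bar> \<ge> 1" using F(3) by linarith
  have "charge_unbounded_on F \<or> charge_unbounded_on G"
  proof (rule ccontr)
    assume "\<not> (charge_unbounded_on F \<or> charge_unbounded_on G)"
    then obtain bF bG where bF: "\<And>H. bsetT H \<Longrightarrow> H \<subseteq> F \<Longrightarrow> \<bar>\<rho> H\<bar> \<le> bF"
      and bG: "\<And>H. bsetT H \<Longrightarrow> H \<subseteq> G \<Longrightarrow> \<bar>\<rho> H\<bar> \<le> bG"
      using F(1) G unfolding charge_unbounded_on_def by (meson not_le)
    have "\<bar>\<rho> H\<bar> \<le> bF + bG" if H: "bsetT H" "H \<subseteq> E" for H
    proof -
      have h1: "bsetT (H \<inter> F)" "bsetT (H - F)" using H(1) F(1) bsetT_Int bsetT_Diff bsetT_borel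
        by blast+
      have "H = (H \<inter> F) \<union> (H - F)" by auto
      then have "\<rho> H = \<rho> (H \<inter> F) + \<rho> (H - F)" using charge_Un[OF h1]
        by (metis Diff_disjoint inf_assoc inf_bot_right inf_commute Int_Diff)
      moreover have "\<bar>\<rho> (H \<inter> F)\<bar> \<le> bF" using bF[OF h1(1)] by auto
      moreover have "\<bar>\<rho> (H - F)\<bar> \<le> bG" using bG[OF h1(2)] H(2) unfolding G_def by auto
      ultimately show ?thesis by linarith
    qed
    then show False using assms unfolding charge_unbounded_on_def by (meson not_le)
  qed
  moreover have GE: "G \<subseteq> E" "F \<inter> G = {}" "G \<inter> F = {}" unfolding G_def by auto
  ultimately show ?thesis
  proof (elim disjE)
    assume "charge_unbounded_on F" then show ?thesis using G G1 F(2) GE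
      by (intro exI[of _ G] exI[of _ F]) auto
  next
    assume "charge_unbounded_on G" then show ?thesis using F F1 GE
      by (intro exI[of _ F] exI[of _ G]) auto
  qed
qed

text \<open>Splitting repeatedly produces disjoint sets of charge at least 1, contradicting the
  convergence of \<open>\<Sum>\<^sub>n \<rho>(A\<^sub>n)\<close>.\<close>

lemma not_charge_unbounded_on_TT: "\<not> charge_unbounded_on TT"
proof
  assume b0: "charge_unbounded_on TT"
  define splits where "splits E p \<longleftrightarrow> bsetT (fst p) \<and> charge_unbounded_on (snd p)
      \<and> fst p \<subseteq> E \<and> snd p \<subseteq> E \<and> fst p \<inter> snd p = {} \<and> 1 \<le> \<bar>\<rho> (fst p)\<bar>" for E p
  have "\<forall>E. \<exists>p. charge_unbounded_on E \<longrightarrow> splits E p"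
    using charge_unbounded_on_split unfolding splits_def by fastforce
  then obtain st where "\<And>E. charge_unbounded_on E \<Longrightarrow> splits E (st E)" by metis
  note st = this[unfolded splits_def]
  define Es where "Es n = rec_nat TT (\<lambda>_ X. snd (st X)) n" for n
  have Es0: "Es 0 = TT" and EsS: "Es (Suc n) = snd (st (Es n))" for n unfolding Es_def by simp_all
  have badE: "charge_unbounded_on (Es n)" for n by (induction n) (use b0 st in \<open>auto simp: Es0 EsS\<close>)
  define As where "As n = fst (st (Es n))" for n
  have decE: "decseq Es" by (rule decseq_SucI) (use st badE in \<open>auto simp: EsS\<close>)
  have Ab: "bsetT (As n)" and A1: "\<bar>\<rho> (As n)\<bar> \<ge> 1" and AE: "As n \<subseteq> Es n"
    and AEs: "As n \<inter> Es (Suc n) = {}" for n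
    using st[OF badE[of n]] unfolding As_def EsS by auto
  have "disjoint_family As"
    unfolding disjoint_family_on_def
  proof (intro ballI impI)
    fix m n :: nat assume "m \<noteq> n"
    then consider "m < n" | "n < m" by linarith
    then show "As m \<inter> As n = {}"
    proof cases
      case 1 then have "As n \<subseteq> Es (Suc m)" using AE[of n] decseqD[OF decE, of "Suc m" n] by auto
      then show ?thesis using AEs[of m] by auto
    next
      case 2 then have "As m \<subseteq> Es (Suc n)" using AE[of m] decseqD[OF decE, of "Suc n" m] by auto
      then show ?thesis using AEs[of n] by auto
    qed
  qed
  then have "(\<lambda>n. \<rho> (As n)) sums \<rho> (\<Union>n. As n)" by (rule charge_countably_additive[OF Ab])
  then have "(\<lambda>n. \<rho> (As n)) \<longlonglongrightarrow> 0" by (intro summable_LIMSEQ_zero sums_summable)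
  then have "eventually (\<lambda>n. \<bar>\<rho> (As n)\<bar> < 1) sequentially"
    by (metis (mono_tags, lifting) LIMSEQ_D abs_minus_cancel diff_0_right eventually_sequentially
        real_norm_def zero_less_one)
  then obtain N where "\<forall>n\<ge>N. \<bar>\<rho> (As n)\<bar> < 1" by (auto simp: eventually_sequentially)
  then show False using A1[of N] by auto
qed

lemma charge_bounded: "\<exists>B. \<forall>E. \<bar>\<rho> E\<bar> \<le> B"
proof -
  obtain b where b: "\<And>F. bsetT F \<Longrightarrow> F \<subseteq> TT \<Longrightarrow> \<bar>\<rho> F\<bar> \<le> b"
    using not_charge_unbounded_on_TT bsetT_TT unfolding charge_unbounded_on_def by (meson not_le)
  have "\<bar>\<rho> E\<bar> \<le> max b 0" for E
    using b[of E] charge_outside[of E] by (cases "bsetT E") (auto simp: bsetT_def)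
  then show ?thesis by blast
qed

lemma charge_Int_lower_bound:
  assumes le: "\<And>E. bsetT E \<Longrightarrow> \<rho> E \<le> \<gamma>" and X: "bsetT X" and Y: "bsetT Y"
  shows "\<rho> X + \<rho> Y - \<gamma> \<le> \<rho> (X \<inter> Y)"
proof -
  have b: "bsetT (X \<inter> Y)" "bsetT (Y - X)"
    using bsetT_Int[OF X bsetT_borel[OF Y]] bsetT_Diff[OF Y bsetT_borel[OF X]] by auto
  have "\<rho> (X \<union> Y) = \<rho> X + \<rho> (Y - X)" using charge_Un[OF X b(2)] by (simp add: Un_Diff_cancel)
  moreover have "(X \<inter> Y) \<union> (Y - X) = Y" "(X \<inter> Y) \<inter> (Y - X) = {}" by auto
  then have "\<rho> Y = \<rho> (X \<inter> Y) + \<rho> (Y - X)" using charge_Un[OF b] by simp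
  moreover have "\<rho> (X \<union> Y) \<le> \<gamma>" using le bsetT_Un[OF X Y] by blast
  ultimately show ?thesis by linarith
qed

text \<open>A set of maximal charge is obtained as \<open>\<Union>\<^sub>m \<Inter>\<^sub>k\<^sub>\<ge>\<^sub>m E\<^sub>k\<close> from sets \<open>E\<^sub>k\<close> whose charges
  exceed the supremum minus \<open>2\<^sup>-\<^sup>k\<close>; the errors are controlled by \<open>charge_Int_lower_bound\<close>.\<close>

lemma charge_attains_max: "\<exists>P. bsetT P \<and> (\<forall>E. bsetT E \<longrightarrow> \<rho> E \<le> \<rho> P)"
proof -
  obtain B where B: "\<And>E. \<bar>\<rho> E\<bar> \<le> B" using charge_bounded by blast
  define S where "S = \<rho> ` {E. bsetT E}"
  have bdd: "bdd_above S" unfolding S_def using B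
    by (intro bdd_aboveI[of _ B]) (auto simp: abs_le_iff)
  have ne: "S \<noteq> {}" unfolding S_def using bsetT_empty by auto
  define \<gamma> where "\<gamma> = Sup S"
  have le\<gamma>: "\<rho> E \<le> \<gamma>" if "bsetT E" for E unfolding \<gamma>_def using bdd that
    by (auto intro!: cSup_upper simp: S_def)
  have "\<exists>E. bsetT E \<and> \<gamma> - (1/2)^n < \<rho> E" for n :: nat
  proof -
    have "\<gamma> - (1/2)^n < Sup S" unfolding \<gamma>_def by simp
    then obtain x where "x \<in> S" "\<gamma> - (1/2)^n < x" using less_cSup_iff[OF ne bdd] by blast
    then show ?thesis unfolding S_def by auto
  qed
  then obtain E where Eb: "\<And>n. bsetT (E n)" and Eg: "\<And>n. \<gamma> - (1/2)^n < \<rho> (E n)" by metis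
  define C where "C m k = (\<Inter>i\<in>{..k}. E (m + i))" for m k
  have Cb: "bsetT (C m k)" for m k
  proof -
    have "(\<Inter>i\<in>{..k}. E (m + i)) \<in> sets borel" using Eb bsetT_borel by (intro sets.finite_INT) auto
    moreover have "(\<Inter>i\<in>{..k}. E (m + i)) \<subseteq> E m" by auto
    ultimately show ?thesis unfolding C_def using bsetT_sub[OF Eb] by blast
  qed
  have C_bound: "\<gamma> - 2 * (1/2)^m + (1/2)^(m+k) \<le> \<rho> (C m k)" for m k
  proof (induction k)
    case 0 then show ?case using Eg[of m] by (simp add: C_def)
  next
    case (Suc k)
    have "C m (Suc k) = C m k \<inter> E (m + Suc k)" unfolding C_def by (auto simp: atMost_Suc)
    then have "\<rho> (C m k) + \<rho> (E (m + Suc k)) - \<gamma> \<le> \<rho> (C m (Suc k))"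
      using charge_Int_lower_bound[OF le\<gamma> Cb Eb] by simp
    moreover have "(1/2::real)^(m + Suc k) = (1/2)^(m+k) / 2" by simp
    ultimately show ?case using Suc Eg[of "m + Suc k"] by linarith
  qed
  define D where "D m = (\<Inter>k. C m k)" for m
  have Db: "bsetT (D m)" for m unfolding D_def by (rule bsetT_INT[OF Cb])
  have D_bound: "\<gamma> - 2 * (1/2)^m \<le> \<rho> (D m)" for m
  proof (rule LIMSEQ_le_const)
    show "(\<lambda>k. \<rho> (C m k)) \<longlonglongrightarrow> \<rho> (D m)"
      unfolding D_def by (rule charge_continuous_from_above[OF Cb]) (auto simp: C_def decseq_def)
    have "\<gamma> - 2 * (1/2)^m \<le> \<rho> (C m k)" for k
      using C_bound[of m k] zero_le_power[of "1/2::real" "m+k"] by linarith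
    then show "\<exists>N. \<forall>k\<ge>N. \<gamma> - 2 * (1/2)^m \<le> \<rho> (C m k)" by blast
  qed
  have "incseq D" unfolding incseq_def D_def C_def
  proof (intro allI impI subsetI)
    fix m n x assume "m \<le> n" and x: "x \<in> (\<Inter>k. \<Inter>i\<in>{..k}. E (m + i))"
    have "x \<in> E (m + i)" for i using x by auto
    then have "x \<in> E j" if "j \<ge> m" for j using that by (metis le_add_diff_inverse)
    then show "x \<in> (\<Inter>k. \<Inter>i\<in>{..k}. E (n + i))" using \<open>m \<le> n\<close> by auto
  qed
  define P where "P = (\<Union>m. D m)"
  have "(\<lambda>m. \<rho> (D m)) \<longlonglongrightarrow> \<rho> P" unfolding P_def
    by (rule charge_continuous_from_below[OF Db \<open>incseq D\<close>])
  moreover have "(\<lambda>m. \<gamma> - 2 * (1/2)^m) \<longlonglongrightarrow> \<gamma> - 2 * 0"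
    by (intro tendsto_diff tendsto_mult tendsto_const LIMSEQ_power_zero) auto
  ultimately have "\<gamma> \<le> \<rho> P" using D_bound
    by (intro LIMSEQ_le[of "\<lambda>m. \<gamma> - 2 * (1/2)^m" _ "\<lambda>m. \<rho> (D m)"]) auto
  moreover have "bsetT P" unfolding P_def by (rule bsetT_UN[OF Db])
  ultimately show ?thesis using le\<gamma> by (meson order_trans)
qed

lemma Hahn_decomposition:
  obtains P where "bsetT P" "\<And>F. bsetT F \<Longrightarrow> F \<subseteq> P \<Longrightarrow> 0 \<le> \<rho> F"
    "\<And>F. bsetT F \<Longrightarrow> F \<inter> P = {} \<Longrightarrow> \<rho> F \<le> 0"
proof -
  obtain P where P: "bsetT P" and max: "\<And>E. bsetT E \<Longrightarrow> \<rho> E \<le> \<rho> P"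
    using charge_attains_max by blast
  have "0 \<le> \<rho> F" if F: "bsetT F" "F \<subseteq> P" for F
    using charge_Diff[OF P F] max[OF bsetT_Diff[OF P bsetT_borel[OF F(1)]]] by linarith
  moreover have "\<rho> F \<le> 0" if F: "bsetT F" "F \<inter> P = {}" for F
    using charge_Un[OF P F(1)] F(2) max[OF bsetT_Un[OF P F(1)]] by (simp add: Int_commute)
  ultimately show ?thesis using that P by blast
qed

end

section \<open>Complex measures are representable\<close>

definition positive_charge :: "(real set \<Rightarrow> real) \<Rightarrow> bool" where
  "positive_charge \<nu> \<longleftrightarrow> (\<forall>E\<in>sets borel. \<nu> E \<ge> 0) \<and>
     (\<forall>A. range A \<subseteq> sets borel \<longrightarrow> disjoint_family A \<longrightarrow> (\<lambda>n. \<nu> (A n)) sums \<nu> (\<Union>n. A n))"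

definition charge_measure :: "(real set \<Rightarrow> real) \<Rightarrow> real measure" where
  "charge_measure \<nu> = measure_of UNIV (sets borel) (\<lambda>E. ennreal (\<nu> E))"

lemma charge_measure_sets: "sets (charge_measure \<nu>) = sets borel"
  unfolding charge_measure_def by (metis sets.sets_measure_of_eq space_borel)

lemma charge_measure_space: "space (charge_measure \<nu>) = UNIV"
  unfolding charge_measure_def by (simp add: space_measure_of_conv)

lemma emeasure_charge_measure:
  assumes "positive_charge \<nu>" "E \<in> sets borel"
  shows "emeasure (charge_measure \<nu>) E = ennreal (\<nu> E)"
  unfolding charge_measure_def
proof (rule emeasure_measure_of_sigma)
  show "sigma_algebra UNIV (sets borel)" by (metis sets.sigma_algebra_axioms space_borel)
  show "positive (sets borel) (\<lambda>E. ennreal (\<nu> E))" unfolding positive_def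
  proof -
    have "(\<lambda>n::nat. \<nu> {}) sums \<nu> (\<Union>n::nat. {})" using assms(1) unfolding positive_charge_def
      by (auto simp: disjoint_family_on_def)
    then have "summable (\<lambda>n::nat. \<nu> {})" by (rule sums_summable)
    then have "(\<lambda>n::nat. \<nu> {}) \<longlonglongrightarrow> 0" by (rule summable_LIMSEQ_zero)
    then have "\<nu> {} = 0" by (simp add: LIMSEQ_const_iff)
    then show "ennreal (\<nu> {}) = 0" by simp
  qed
  show "countably_additive (sets borel) (\<lambda>E. ennreal (\<nu> E))" unfolding countably_additive_def
  proof (intro allI impI)
    fix A :: "nat \<Rightarrow> real set" assume "range A \<subseteq> sets borel" "disjoint_family A"
    then have s: "(\<lambda>n. \<nu> (A n)) sums \<nu> (\<Union>n. A n)" and nn: "\<And>n. \<nu> (A n) \<ge> 0"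
      using assms(1) unfolding positive_charge_def by auto
    show "(\<Sum>i. ennreal (\<nu> (A i))) = ennreal (\<nu> (\<Union> (range A)))" by (rule suminf_ennreal_eq[OF nn s])
  qed
qed fact

lemma finite_measure_charge_measure:
  assumes "positive_charge \<nu>" shows "finite_measure (charge_measure \<nu>)"
  by (rule finite_measureI) (simp add: charge_measure_space emeasure_charge_measure[OF assms])

lemma positive_charge_density:
  assumes \<nu>: "positive_charge \<nu>" and m: "positive_charge m" and le: "\<And>E. E \<in> sets borel \<Longrightarrow> \<nu> E \<le> m E"
  obtains g where "integrable (charge_measure m) g"
    "\<And>E. E \<in> sets borel \<Longrightarrow> \<nu> E = (LINT t|charge_measure m. indicator E t * g t)"
proof -
  let ?M = "charge_measure m" and ?N = "charge_measure \<nu>"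
  interpret M: finite_measure ?M by (rule finite_measure_charge_measure[OF m])
  have sN: "sets ?N = sets ?M" by (simp add: charge_measure_sets)
  have ac: "absolutely_continuous ?M ?N" unfolding absolutely_continuous_def
  proof
    fix A assume "A \<in> null_sets ?M"
    then have A: "A \<in> sets borel" "ennreal (m A) = 0" using emeasure_charge_measure[OF m]
      by (auto simp: charge_measure_sets null_sets_def)
    then have "m A \<le> 0" by (simp add: ennreal_eq_0_iff)
    moreover have "\<nu> A \<ge> 0" using \<nu> A(1) unfolding positive_charge_def by auto
    ultimately have "\<nu> A = 0" using le[OF A(1)] by linarith
    then show "A \<in> null_sets ?N" using A emeasure_charge_measure[OF \<nu> A(1)]
      by (auto simp: charge_measure_sets null_sets_def)
  qed
  obtain f where fm: "f \<in> borel_measurable ?M" and df: "density ?M f = ?N"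
    using M.Radon_Nikodym_finite_measure[OF finite_measure_charge_measure[OF \<nu>] sN ac] by blast
  have eqE: "ennreal (\<nu> E) = (\<integral>\<^sup>+ x. f x * indicator E x \<partial>?M)" if "E \<in> sets borel" for E
    using emeasure_density[OF fm, of E] that df emeasure_charge_measure[OF \<nu> that]
    by (simp add: charge_measure_sets)
  have "(\<integral>\<^sup>+ x. f x \<partial>?M) = ennreal (\<nu> UNIV)" using eqE[of UNIV] by simp
  then have fin: "AE x in ?M. f x \<noteq> \<infinity>" by (intro nn_integral_PInf_AE[OF fm]) simp
  define g where "g x = enn2real (f x)" for x
  have gM: "g \<in> borel_measurable ?M" unfolding g_def using fm by measurable
  have key: "(\<integral>\<^sup>+ x. f x * indicator E x \<partial>?M) = (\<integral>\<^sup>+ x. ennreal (indicator E x * g x) \<partial>?M)" for E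
    using fin by (intro nn_integral_cong_AE) (auto simp: g_def indicator_def less_top)
  have int: "integrable ?M (\<lambda>x. indicator E x * g x)"
    and eq: "\<nu> E = (LINT t|?M. indicator E t * g t)" if E: "E \<in> sets borel" for E
  proof -
    have EM: "E \<in> sets ?M" using E by (simp add: charge_measure_sets)
    have nn: "\<nu> E \<ge> 0" using \<nu> E unfolding positive_charge_def by auto
    have 1: "(\<integral>\<^sup>+ x. ennreal (indicator E x * g x) \<partial>?M) = ennreal (\<nu> E)" using eqE[OF E] key by simp
    show i: "integrable ?M (\<lambda>x. indicator E x * g x)"
    proof (rule integrableI_nn_integral_finite[OF _ _ 1])
      show "(\<lambda>x. indicator E x * g x) \<in> borel_measurable ?M" using gM EM by measurable
    qed (auto simp: g_def)
    have "(\<integral>\<^sup>+ x. ennreal (indicator E x * g x) \<partial>?M) = ennreal (LINT t|?M. indicator E t * g t)"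
      by (rule nn_integral_eq_integral[OF i]) (auto simp: g_def)
    moreover have "(LINT t|?M. indicator E t * g t) \<ge> 0"
      by (intro integral_nonneg_AE) (auto simp: g_def)
    ultimately show "\<nu> E = (LINT t|?M. indicator E t * g t)" using 1 nn by (simp add: ennreal_inj)
  qed
  have "integrable ?M g" using int[of UNIV] by simp
  with eq show ?thesis using that by blast
qed

lemma (in real_charge) positive_charge_restrict:
  assumes R: "bsetT R" and sign: "\<And>F. bsetT F \<Longrightarrow> F \<subseteq> R \<Longrightarrow> 0 \<le> s * \<rho> F"
  shows "positive_charge (\<lambda>E. s * \<rho> (E \<inter> R))"
  unfolding positive_charge_def
proof (intro conjI ballI allI impI)
  fix E :: "real set" assume "E \<in> sets borel"
  then show "0 \<le> s * \<rho> (E \<inter> R)" using R by (intro sign) (auto simp: bsetT_def)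
next
  fix A :: "nat \<Rightarrow> real set" assume A: "range A \<subseteq> sets borel" "disjoint_family A"
  have "(\<lambda>n. \<rho> (A n \<inter> R)) sums \<rho> (\<Union>n. A n \<inter> R)"
  proof (rule charge_countably_additive)
    show "bsetT (A n \<inter> R)" for n using A(1) R unfolding bsetT_def by auto
    show "disjoint_family (\<lambda>n. A n \<inter> R)" using A(2) unfolding disjoint_family_on_def by auto
  qed
  then show "(\<lambda>n. s * \<rho> (A n \<inter> R)) sums (s * \<rho> ((\<Union>n. A n) \<inter> R))"
    by (simp add: sums_mult)
qed

lemma (in real_charge) Jordan_decomposition:
  obtains \<nu>p \<nu>n where "positive_charge \<nu>p" "positive_charge \<nu>n"
    "\<And>E. bsetT E \<Longrightarrow> \<rho> E = \<nu>p E - \<nu>n E" "\<nu>p (- TT) = 0" "\<nu>n (- TT) = 0"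
proof -
  obtain P where P: "bsetT P" and pos: "\<And>F. bsetT F \<Longrightarrow> F \<subseteq> P \<Longrightarrow> 0 \<le> \<rho> F"
    and neg: "\<And>F. bsetT F \<Longrightarrow> F \<inter> P = {} \<Longrightarrow> \<rho> F \<le> 0" using Hahn_decomposition by metis
  define Q where "Q = TT - P"
  have Q: "bsetT Q" unfolding Q_def using bsetT_Diff[OF bsetT_TT bsetT_borel[OF P]] .
  have "positive_charge (\<lambda>E. 1 * \<rho> (E \<inter> P))"
    by (rule positive_charge_restrict[OF P]) (simp add: pos)
  moreover have "positive_charge (\<lambda>E. (-1) * \<rho> (E \<inter> Q))"
    by (rule positive_charge_restrict[OF Q]) (use neg in \<open>auto simp: Q_def\<close>)
  moreover have "\<rho> E = 1 * \<rho> (E \<inter> P) - (-1) * \<rho> (E \<inter> Q)" if E: "bsetT E" for E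
  proof -
    have b: "bsetT (E \<inter> P)" "bsetT (E \<inter> Q)" using E P Q bsetT_Int bsetT_borel by blast+
    have "E = (E \<inter> P) \<union> (E \<inter> Q)" "(E \<inter> P) \<inter> (E \<inter> Q) = {}" using E unfolding Q_def bsetT_def by auto
    then show ?thesis using charge_Un[OF b] by (metis diff_minus_eq_add mult_1 mult_minus1)
  qed
  moreover have "- TT \<inter> P = {}" "- TT \<inter> Q = {}" using P unfolding Q_def bsetT_def by auto
  ultimately show ?thesis using that by (simp add: charge_empty)
qed

lemma cmeas_Re_Im_real_charge:
  assumes "cmeas \<mu>"
  shows "real_charge (\<lambda>E. Re (\<mu> E))" "real_charge (\<lambda>E. Im (\<mu> E))"
  using assms unfolding cmeas_def real_charge_def by (auto intro: sums_Re sums_Im)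

lemma positive_charge_add: "positive_charge a \<Longrightarrow> positive_charge b \<Longrightarrow> positive_charge (\<lambda>E. a E + b E)"
  unfolding positive_charge_def by (auto intro: sums_add)

lemma charge_difference_density:
  assumes p: "positive_charge p" and n: "positive_charge n" and m: "positive_charge m"
    and le: "\<And>E. E \<in> sets borel \<Longrightarrow> p E \<le> m E" "\<And>E. E \<in> sets borel \<Longrightarrow> n E \<le> m E"
  obtains g where "integrable (charge_measure m) g"
    "\<And>E. E \<in> sets borel \<Longrightarrow> p E - n E = (LINT t:E|charge_measure m. g t)"
proof -
  let ?M = "charge_measure m"
  obtain gp where gp: "integrable ?M gp" "\<And>E. E \<in> sets borel \<Longrightarrow> p E = (LINT t|?M. indicator E t
      * gp t)"
    using positive_charge_density[OF p m le(1)] by metis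
  obtain gn where gn: "integrable ?M gn" "\<And>E. E \<in> sets borel \<Longrightarrow> n E = (LINT t|?M. indicator E t
      * gn t)"
    using positive_charge_density[OF n m le(2)] by metis
  have "p E - n E = (LINT t:E|?M. gp t - gn t)" if E: "E \<in> sets borel" for E
  proof -
    have "integrable ?M (\<lambda>t. indicator E t * g t)" if "integrable ?M g" for g :: "real \<Rightarrow> real"
      using integrable_mult_indicator[of E ?M g] that E by (simp add: charge_measure_sets)
    then have "(LINT t|?M. indicator E t * gp t) - (LINT t|?M. indicator E t * gn t)
        = (LINT t|?M. indicator E t * (gp t - gn t))"
      using gp(1) gn(1) by (simp add: right_diff_distrib)
    then show ?thesis using gp(2)[OF E] gn(2)[OF E] by (simp add: set_lebesgue_integral_def)
  qed
  then show ?thesis using that[of "\<lambda>t. gp t - gn t"] gp(1) gn(1) by auto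
qed

lemma cmeas_imp_crep:
  assumes mu: "cmeas \<mu>"
  shows "\<exists>M h. crep M h \<mu>"
proof -
  obtain p1 n1 where p1: "positive_charge p1" and n1: "positive_charge n1"
    and d1: "\<And>E. bsetT E \<Longrightarrow> Re (\<mu> E) = p1 E - n1 E" and z1: "p1 (- TT) = 0" "n1 (- TT) = 0"
    using real_charge.Jordan_decomposition[OF cmeas_Re_Im_real_charge(1)[OF mu]] by metis
  obtain p2 n2 where p2: "positive_charge p2" and n2: "positive_charge n2"
    and d2: "\<And>E. bsetT E \<Longrightarrow> Im (\<mu> E) = p2 E - n2 E" and z2: "p2 (- TT) = 0" "n2 (- TT) = 0"
    using real_charge.Jordan_decomposition[OF cmeas_Re_Im_real_charge(2)[OF mu]] by metis
  define m where "m E = p1 E + n1 E + p2 E + n2 E" for E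
  have m: "positive_charge m" unfolding m_def by (intro positive_charge_add p1 n1 p2 n2)
  have "p1 E \<ge> 0 \<and> n1 E \<ge> 0 \<and> p2 E \<ge> 0 \<and> n2 E \<ge> 0" if "E \<in> sets borel" for E
    using p1 n1 p2 n2 that unfolding positive_charge_def by auto
  then have le: "p1 E \<le> m E" "n1 E \<le> m E" "p2 E \<le> m E" "n2 E \<le> m E" if "E \<in> sets borel" for E
    using that unfolding m_def by force+
  let ?M = "charge_measure m"
  obtain g1 where g1: "integrable ?M g1" "\<And>E. E \<in> sets borel \<Longrightarrow> p1 E - n1 E = (LINT t:E|?M. g1 t)"
    using charge_difference_density[OF p1 n1 m le(1,2)] by blast
  obtain g2 where g2: "integrable ?M g2" "\<And>E. E \<in> sets borel \<Longrightarrow> p2 E - n2 E = (LINT t:E|?M. g2 t)"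
    using charge_difference_density[OF p2 n2 m le(3,4)] by blast
  define h where "h t = complex_of_real (g1 t) + \<i> * complex_of_real (g2 t)" for t
  have "crep ?M h \<mu>"
    unfolding crep_def
  proof (intro conjI allI)
    show "sets ?M = sets borel" by (rule charge_measure_sets)
    show "finite_measure ?M" by (rule finite_measure_charge_measure[OF m])
    have "m (- TT) = 0" unfolding m_def using z1 z2 by simp
    then show "emeasure ?M (- TT) = 0" using emeasure_charge_measure[OF m, of "- TT"] TT_borel
      by simp
    show "integrable ?M h" unfolding h_def using g1 g2 by auto
    fix E
    show "\<mu> E = (if bsetT E then (LINT t:E|?M. h t) else 0)"
    proof (cases "bsetT E")
      case False then show ?thesis using mu unfolding cmeas_def by auto
    next
      case True
      have Eb: "E \<in> sets borel" using True bsetT_borel by blast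
      have "set_integrable ?M E (\<lambda>t. complex_of_real (g t))" if "integrable ?M g" for g
        unfolding set_integrable_def using Eb that
        by (auto intro!: integrable_mult_indicator simp: charge_measure_sets)
      then have "(LINT t:E|?M. h t) = of_real (LINT t:E|?M. g1 t) + \<i> * of_real (LINT t:E|?M. g2 t)"
        unfolding h_def using g1(1) g2(1)
        by (simp add: set_integral_add set_integral_complex_of_real)
      also have "\<dots> = \<mu> E" using d1[OF True] d2[OF True] g1(2)[OF Eb] g2(2)[OF Eb]
        by (simp add: complex_eq_iff)
      finally show ?thesis using True by simp
    qed
  qed
  then show ?thesis by blast
qed

section \<open>The operators \<open>T\<^sub>m\<close>\<close>

lemma cmeas_linear_combination:
  assumes "cmeas \<mu>1" "cmeas \<mu>2"
  shows "cmeas (\<lambda>E. \<mu>1 E + c * \<mu>2 E)"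
  using assms unfolding cmeas_def by (auto intro!: sums_add sums_mult)

lemma cint_linear_combination:
  assumes "cmeas \<mu>1" "cmeas \<mu>2" "bounded_borel f"
  shows "cint (\<lambda>E. \<mu>1 E + c * \<mu>2 E) f = cint \<mu>1 f + c * cint \<mu>2 f"
proof -
  obtain M1 h1 where r1: "crep M1 h1 \<mu>1" using cmeas_imp_crep[OF assms(1)] by blast
  obtain M2 h2 where r2: "crep M2 h2 \<mu>2" using cmeas_imp_crep[OF assms(2)] by blast
  obtain M3 h3 where r3: "crep M3 h3 (\<lambda>E. \<mu>1 E + c * \<mu>2 E)"
    using cmeas_imp_crep[OF cmeas_linear_combination[OF assms(1,2)]] by blast
  show ?thesis
    using rep_integral_linear_combination[OF r1 r2 r3 _ assms(3)]
      cint_eq_rep_integral[OF r1 assms(3)] cint_eq_rep_integral[OF r2 assms(3)]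
      cint_eq_rep_integral[OF r3 assms(3)] by simp
qed

definition character :: "int \<Rightarrow> real \<Rightarrow> complex" where
  "character m t = exp (\<i> * of_int m * of_real t)"

lemma bounded_borel_character: "bounded_borel (character m)"
  unfolding bounded_borel_def character_def
proof
  show "(\<lambda>t. exp (\<i> * of_int m * complex_of_real t)) \<in> borel_measurable borel"
    by (intro borel_measurable_continuous_onI continuous_intros)
  have "norm (exp (\<i> * of_int m * complex_of_real t)) = 1" for t
    by (simp add: norm_exp_eq_Re)
  then show "\<exists>C. \<forall>x. cmod (exp (\<i> * of_int m * complex_of_real x)) \<le> C" by (intro exI[of _ 1]) simp
qed

lemma character_mult: "character m t * character n t = character (m + n) t"
  unfolding character_def by (simp add: exp_add[symmetric] algebra_simps)

lemma character_0: "character 0 t = 1" unfolding character_def by simp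

lemma Tshift_eq_cint_character: "Tshift m \<mu> = (\<lambda>E. if bsetT E then cint \<mu> (\<lambda>t. indicator E t
    * character m t) else 0)"
  unfolding Tshift_def character_def by simp

lemma crep_Tshift:
  assumes r: "crep M h \<mu>"
  shows "crep M (\<lambda>t. character m t * h t) (Tshift m \<mu>)"
  unfolding crep_def
proof (intro conjI allI)
  show "sets M = sets borel" "finite_measure M" "emeasure M (- TT) = 0" using r unfolding crep_def
    by auto
  show "integrable M (\<lambda>t. character m t * h t)"
    using crep_integrable_mult[OF r bounded_borel_character] .
  fix E
  show "Tshift m \<mu> E = (if bsetT E then LINT t:E|M. character m t * h t else 0)"
  proof (cases "bsetT E")
    case True
    have b: "bounded_borel (\<lambda>t. indicator E t * character m t)"
      using True
      by (intro bounded_borel_mult bounded_borel_indicator bounded_borel_character bsetT_borel)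
    have "Tshift m \<mu> E = rep_integral M h (\<lambda>t. indicator E t * character m t)"
      unfolding Tshift_eq_cint_character using True cint_eq_rep_integral[OF r b] by simp
    also have "\<dots> = (LINT t:E|M. character m t * h t)"
      unfolding rep_integral_def set_lebesgue_integral_def
      by (intro Bochner_Integration.integral_cong refl) (simp add: indicator_def)
    finally show ?thesis using True by simp
  qed (simp add: Tshift_eq_cint_character)
qed

lemma crep_same_density:
  assumes "crep M h \<mu>" "crep M h' \<nu>" "\<And>t. h t = h' t"
  shows "\<mu> = \<nu>"
proof -
  have "h = h'" using assms(3) by auto
  then show ?thesis using assms(1,2) unfolding crep_def by auto
qed

lemma cmeas_Tshift: "cmeas \<mu> \<Longrightarrow> cmeas (Tshift m \<mu>)"
  using cmeas_imp_crep crep_Tshift crep_imp_cmeas by blast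

lemma Tshift_uminus_Tshift:
  assumes "cmeas \<mu>"
  shows "Tshift (-m) (Tshift m \<mu>) = \<mu>"
proof -
  obtain M h where r: "crep M h \<mu>" using cmeas_imp_crep[OF assms] by blast
  have "crep M (\<lambda>t. character (-m) t * (character m t * h t)) (Tshift (-m) (Tshift m \<mu>))"
    by (intro crep_Tshift r)
  then show ?thesis
    by (rule crep_same_density[OF _ r]) (simp add: mult.assoc[symmetric] character_mult character_0)
qed

lemma Tshift_0:
  assumes "cmeas \<mu>"
  shows "Tshift 0 \<mu> = \<mu>"
proof -
  obtain M h where r: "crep M h \<mu>" using cmeas_imp_crep[OF assms] by blast
  have "crep M (\<lambda>t. character 0 t * h t) (Tshift 0 \<mu>)" by (intro crep_Tshift r)
  then show ?thesis by (rule crep_same_density[OF _ r]) (simp add: character_0)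
qed

lemma Tshift_linear_combination:
  assumes "cmeas \<mu>1" "cmeas \<mu>2"
  shows "Tshift m (\<lambda>E. \<mu>1 E + c * \<mu>2 E) = (\<lambda>E. Tshift m \<mu>1 E + c * Tshift m \<mu>2 E)"
proof
  fix E
  show "Tshift m (\<lambda>E. \<mu>1 E + c * \<mu>2 E) E = Tshift m \<mu>1 E + c * Tshift m \<mu>2 E"
  proof (cases "bsetT E")
    case True
    have b: "bounded_borel (\<lambda>t. indicator E t * character m t)"
      using True
      by (intro bounded_borel_mult bounded_borel_indicator bounded_borel_character bsetT_borel)
    show ?thesis unfolding Tshift_eq_cint_character using True cint_linear_combination[OF assms b]
      by simp
  qed (simp add: Tshift_eq_cint_character)
qed

lemma crep_delta0: "crep (return borel 0) (\<lambda>t. 1) delta0"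
  unfolding crep_def
proof (intro conjI allI)
  show "sets (return borel 0) = sets borel" by simp
  show "finite_measure (return borel 0)" by (intro prob_space.finite_measure prob_space_return) simp
  have "0 \<in> TT" unfolding TT_def by simp
  then show "emeasure (return borel (0::real)) (- TT) = 0" using TT_borel
    by (simp add: indicator_def)
  show "integrable (return borel 0) (\<lambda>t. 1::complex)"
    by (intro finite_measure.integrable_const prob_space.finite_measure prob_space_return) simp
  fix E
  show "delta0 E = (if bsetT E then LINT t:E|return borel 0. 1 else 0)"
  proof (cases "bsetT E")
    case True
    have Eb: "E \<in> sets borel" using True bsetT_borel by blast
    have "(LINT x|return borel 0. indicator E x *\<^sub>R (1::complex)) = indicator E (0::real) *\<^sub>R 1"
      by (rule integral_return) (use Eb in measurable)
    then show ?thesis using True unfolding delta0_def set_lebesgue_integral_def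
      by (simp add: indicator_def)
  qed (simp add: delta0_def)
qed

lemma cmeas_delta0: "cmeas delta0" by (rule crep_imp_cmeas[OF crep_delta0])

lemma Tshift_delta0: "Tshift m delta0 = delta0"
proof -
  have r: "crep (return borel 0) (\<lambda>t. character m t * 1) (Tshift m delta0)"
    by (rule crep_Tshift[OF crep_delta0])
  show ?thesis
  proof
    fix E show "Tshift m delta0 E = delta0 E"
    proof (cases "bsetT E")
      case True
      have Eb: "E \<in> sets borel" using True bsetT_borel by blast
      have em: "character m \<in> borel_measurable borel" using bounded_borel_character
        unfolding bounded_borel_def by blast
      have "Tshift m delta0 E = (LINT x|return borel 0. indicator E x *\<^sub>R (character m x * 1))"
        using r True unfolding crep_def set_lebesgue_integral_def by simp
      also have "\<dots> = indicator E 0 *\<^sub>R (character m 0 * 1)"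
        by (rule integral_return) (use Eb em in measurable)
      also have "\<dots> = delta0 E" using True unfolding delta0_def character_def
        by (simp add: indicator_def)
      finally show ?thesis .
    next
      case False then show ?thesis using r unfolding crep_def delta0_def by simp
    qed
  qed
qed

lemma fourier_Tshift:
  assumes "cmeas \<mu>"
  shows "fourier (Tshift m \<mu>) n = fourier \<mu> (n - m)"
proof -
  obtain M h where r: "crep M h \<mu>" using cmeas_imp_crep[OF assms] by blast
  have e: "(\<lambda>t. exp (- \<i> * of_int k * of_real t)) = character (-k)" for k unfolding character_def
    by auto
  have "fourier (Tshift m \<mu>) n = rep_integral M (\<lambda>t. character m t * h t) (character (-n))"
    unfolding fourier_def e
    by (rule cint_eq_rep_integral[OF crep_Tshift[OF r] bounded_borel_character])
  also have "\<dots> = rep_integral M h (character (-(n - m)))"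
    unfolding rep_integral_def
    by (intro Bochner_Integration.integral_cong refl)
        (simp add: mult.assoc[symmetric] character_mult)
  also have "\<dots> = fourier \<mu> (n - m)" unfolding fourier_def e
    by (rule cint_eq_rep_integral[OF r bounded_borel_character, symmetric])
  finally show ?thesis .
qed

lemma range_fourier_Tshift:
  assumes "cmeas \<mu>"
  shows "range (fourier (Tshift m \<mu>)) = range (fourier \<mu>)"
proof -
  have "fourier (Tshift m \<mu>) = fourier \<mu> \<circ> (\<lambda>n. n - m)" using fourier_Tshift[OF assms] by auto
  then have "range (fourier (Tshift m \<mu>)) = fourier \<mu> ` range (\<lambda>n. n - m)"
    by (simp only: image_comp)
  also have "range (\<lambda>n::int. n - m) = UNIV" by (rule surjI[of _ "\<lambda>n. n + m"]) simp
  finally show ?thesis .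
qed

section \<open>Convolution\<close>

lemma tor_TT: "tor x \<in> TT"
proof -
  have p: "2 * pi > 0" by simp
  let ?y = "x / (2*pi)"
  have "of_int \<lfloor>?y\<rfloor> \<le> ?y" "?y < of_int \<lfloor>?y\<rfloor> + 1" by linarith+
  then have "2*pi * of_int \<lfloor>?y\<rfloor> \<le> 2*pi * ?y" "2*pi * ?y < 2*pi * (of_int \<lfloor>?y\<rfloor> + 1)"
    using p by (intro mult_left_mono mult_strict_left_mono; simp)+
  then have "2*pi * of_int \<lfloor>?y\<rfloor> \<le> x" "x < 2*pi * of_int \<lfloor>?y\<rfloor> + 2*pi"
    using p by (simp_all add: field_simps)
  then show ?thesis unfolding tor_def TT_def by auto
qed

lemma tor_measurable: "tor \<in> borel_measurable borel"
  unfolding tor_def[abs_def] by measurable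

lemma character_tor: "character m (tor x) = character m x"
proof -
  have "character m (tor x) = exp (\<i> * of_int m * of_real x + \<i> * (of_int (- m * \<lfloor>x / (2*pi)\<rfloor>)
      * (of_real pi * 2)))"
    unfolding character_def tor_def by (simp add: algebra_simps)
  also have "\<dots> = character m x" unfolding character_def by (rule exp_plus_2pin)
  finally show ?thesis .
qed

lemma character_add: "character m (s + t) = character m s * character m t"
  unfolding character_def by (simp add: exp_add[symmetric] algebra_simps)

text \<open>The inner integral \<open>t \<mapsto> \<integral> g(s + t) d\<mu>(s)\<close> of \<open>(\<mu> * \<nu>)(g) = \<integral>\<integral> g(s + t) d\<mu>(s) d\<nu>(t)\<close>,
  for \<open>\<mu> = h dM\<close> and with the sum taken modulo \<open>2\<pi>\<close>.\<close>

definition translated_integral ::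
    "real measure \<Rightarrow> (real \<Rightarrow> complex) \<Rightarrow> (real \<Rightarrow> complex) \<Rightarrow> real \<Rightarrow> complex" where
  "translated_integral M h g t = rep_integral M h (\<lambda>s. g (tor (s + t)))"

lemma bounded_borel_translate: "bounded_borel g \<Longrightarrow> bounded_borel (\<lambda>s. g (tor (s + t)))"
  unfolding bounded_borel_def
proof (elim conjE, intro conjI)
  assume "g \<in> borel_measurable borel"
  then show "(\<lambda>s. g (tor (s + t))) \<in> borel_measurable borel" using tor_measurable by measurable
qed auto

lemma translated_integral_norm_bound:
  assumes r: "crep M h a" and g: "bounded_borel g" "\<And>x. norm (g x) \<le> C"
  shows "norm (translated_integral M h g t) \<le> C * (LINT t|M. norm (h t))"
  unfolding translated_integral_def
  by (rule rep_integral_norm_bound[OF r bounded_borel_translate[OF g(1)]]) (use g in auto)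

lemma bounded_borel_translated_integral:
  assumes r: "crep M h a" and g: "bounded_borel g"
  shows "bounded_borel (translated_integral M h g)"
proof -
  have s: "sets M = sets borel" and fin: "finite_measure M" using r unfolding crep_def by auto
  interpret finite_measure M by fact
  have gm: "g \<in> borel_measurable borel" and hm: "h \<in> borel_measurable borel"
    using g crep_density_measurable[OF r] unfolding bounded_borel_def by auto
  have sp: "sets (borel \<Otimes>\<^sub>M M) = sets (borel \<Otimes>\<^sub>M borel)" by (rule sets_pair_measure_cong[OF refl s])
  have "(\<lambda>p. g (tor (snd p + fst p)) * h (snd p)) \<in> borel_measurable (borel \<Otimes>\<^sub>M borel)"
    using gm hm tor_measurable by measurable
  then have "case_prod (\<lambda>t s. g (tor (s + t)) * h s) \<in> borel_measurable (borel \<Otimes>\<^sub>M M)"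
    by (simp add: measurable_cong_sets[OF sp refl] case_prod_beta')
  then have m: "(\<lambda>t. LINT s|M. g (tor (s + t)) * h s) \<in> borel_measurable borel"
    by (rule borel_measurable_lebesgue_integral)
  obtain C where C: "\<And>x. norm (g x) \<le> C" using g unfolding bounded_borel_def by auto
  show ?thesis unfolding bounded_borel_def
  proof
    show "translated_integral M h g \<in> borel_measurable borel" using m
      unfolding translated_integral_def[abs_def] rep_integral_def .
    show "\<exists>C. \<forall>x. norm (translated_integral M h g x) \<le> C"
      using translated_integral_norm_bound[OF r g C] by blast
  qed
qed

lemma borel_tor_preimage: "A \<in> sets borel \<Longrightarrow> {s. tor (s + t) \<in> A} \<in> sets borel"
proof -
  assume A: "A \<in> sets borel"
  have "(\<lambda>s. tor (s + t)) \<in> borel_measurable borel" using tor_measurable by measurable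
  from measurable_sets_borel[OF this A] show ?thesis by (simp add: vimage_def)
qed

lemma translated_integral_indicator:
  assumes r: "crep M h a" and A: "A \<in> sets borel"
  shows "translated_integral M h (indicator A) t = a {s \<in> TT. tor (s + t) \<in> A}"
proof -
  have "(\<lambda>s. indicator A (tor (s + t)) :: complex) = indicator {s. tor (s + t) \<in> A}"
    by (auto simp: indicator_def)
  then have "translated_integral M h (indicator A) t = rep_integral M h (indicator {s. tor (s + t)
      \<in> A})"
    unfolding translated_integral_def by simp
  also have "\<dots> = a ({s. tor (s + t) \<in> A} \<inter> TT)"
    by (rule rep_integral_indicator[OF r borel_tor_preimage[OF A]])
  also have "{s. tor (s + t) \<in> A} \<inter> TT = {s \<in> TT. tor (s + t) \<in> A}" by auto
  finally show ?thesis .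
qed

lemma translated_integral_indicator_sums:
  assumes r: "crep M h a" and A: "\<And>n. A n \<in> sets borel" and d: "disjoint_family A"
  shows "(\<lambda>n. translated_integral M h (indicator (A n)) t)
    sums translated_integral M h (indicator (\<Union>n. A n)) t"
proof -
  have "(\<lambda>n. a {s \<in> TT. tor (s + t) \<in> A n}) sums a (\<Union>n. {s \<in> TT. tor (s + t) \<in> A n})"
  proof (rule crep_imp_cmeas[OF r, unfolded cmeas_def, THEN conjunct2, rule_format])
    show "bsetT {s \<in> TT. tor (s + t) \<in> A n}" for n
      using borel_tor_preimage[OF A[of n], of t] TT_borel unfolding bsetT_def
      by (auto simp: Collect_conj_eq)
    show "disjoint_family (\<lambda>n. {s \<in> TT. tor (s + t) \<in> A n})"
      using d unfolding disjoint_family_on_def by auto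
  qed
  moreover have "(\<Union>n. {s \<in> TT. tor (s + t) \<in> A n}) = {s \<in> TT. tor (s + t) \<in> (\<Union>n. A n)}" by auto
  moreover have "(\<Union>n. A n) \<in> sets borel" using A by auto
  ultimately show ?thesis using translated_integral_indicator[OF r] A by simp
qed

lemma conv_eq_rep_integral:
  assumes ra: "crep Ma ha a" and rb: "crep Mb hb b" and E: "bsetT E"
  shows "conv a b E = rep_integral Mb hb (translated_integral Ma ha (indicator E))"
proof -
  have Eb: "E \<in> sets borel" using E bsetT_borel by blast
  have "(\<lambda>t. a {s \<in> TT. tor (s + t) \<in> E}) = translated_integral Ma ha (indicator E)"
    using translated_integral_indicator[OF ra Eb] by auto
  then show ?thesis unfolding conv_def
    using E cint_eq_rep_integral[OF rb bounded_borel_translated_integral[OF ra]]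
      bounded_borel_indicator[OF Eb] by simp
qed

lemma translated_integral_sum:
  fixes N :: nat
  assumes r: "crep M h a" and A: "\<And>n. A n \<in> sets borel" and d: "disjoint_family A"
  shows "translated_integral M h (indicator (\<Union>i<N. A i)) t
      = (\<Sum>i<N. translated_integral M h (indicator (A i)) t)"
proof -
  have "translated_integral M h (indicator (\<Union>i<N. A i)) t
      = rep_integral M h (\<lambda>s. \<Sum>i<N. indicator (A i) (tor (s + t)))"
    unfolding translated_integral_def indicator_UN_lessThan[OF d] ..
  also have "\<dots> = (\<Sum>i<N. rep_integral M h (\<lambda>s. indicator (A i) (tor (s + t))))"
    by (rule rep_integral_sum[OF r]) (auto intro: bounded_borel_translate bounded_borel_indicator A)
  finally show ?thesis unfolding translated_integral_def .
qed

lemma cmeas_conv: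
  assumes a: "cmeas a" and b: "cmeas b"
  shows "cmeas (conv a b)"
proof -
  obtain Ma ha where ra: "crep Ma ha a" using cmeas_imp_crep[OF a] by blast
  obtain Mb hb where rb: "crep Mb hb b" using cmeas_imp_crep[OF b] by blast
  show ?thesis unfolding cmeas_def
  proof (intro conjI allI impI)
    fix E assume "\<not> bsetT E" then show "conv a b E = 0" unfolding conv_def by simp
  next
    fix A :: "nat \<Rightarrow> real set" assume A: "\<forall>n. bsetT (A n)" and d: "disjoint_family A"
    have Ab: "A n \<in> sets borel" for n using A bsetT_borel by blast
    have U: "bsetT (\<Union>n. A n)" using A by (intro bsetT_UN) auto
    have Ub: "(\<Union>n. A n) \<in> sets borel" using bsetT_borel[OF U] .
    define F where "F N = translated_integral Ma ha (indicator (\<Union>i<N. A i))" for N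
    have Fs: "F N t = (\<Sum>i<N. translated_integral Ma ha (indicator (A i)) t)" for N t
      unfolding F_def by (rule translated_integral_sum[OF ra Ab d])
    have cn: "conv a b (A n) = rep_integral Mb hb (translated_integral Ma ha (indicator (A n)))"
      for n using conv_eq_rep_integral[OF ra rb] A by blast
    have F_bounded: "bounded_borel (F N)" for N
      unfolding F_def using Ab
      by (intro bounded_borel_translated_integral[OF ra] bounded_borel_indicator) auto
    have "(\<lambda>N. rep_integral Mb hb (F N))
        \<longlonglongrightarrow> rep_integral Mb hb (translated_integral Ma ha (indicator (\<Union>n. A n)))"
    proof (rule rep_integral_dominated_convergence[OF rb F_bounded])
      show "bounded_borel (translated_integral Ma ha (indicator (\<Union>n. A n)))"
        by (intro bounded_borel_translated_integral[OF ra] bounded_borel_indicator Ub)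
      show "(\<lambda>N. F N x) \<longlonglongrightarrow> translated_integral Ma ha (indicator (\<Union>n. A n)) x" for x
        using translated_integral_indicator_sums[OF ra Ab d, of x] unfolding Fs sums_def .
      show "norm (F N x) \<le> (LINT t|Ma. norm (ha t))" for N x
        using translated_integral_norm_bound[OF ra bounded_borel_indicator, of "\<Union>i<N. A i" 1 x] Ab
        unfolding F_def by (auto simp: indicator_def)
    qed
    moreover have "rep_integral Mb hb (F N) = (\<Sum>n<N. conv a b (A n))" for N
    proof -
      have "rep_integral Mb hb (F N)
          = rep_integral Mb hb (\<lambda>t. \<Sum>i<N. translated_integral Ma ha (indicator (A i)) t)"
        using Fs by presburger
      also have "\<dots> = (\<Sum>i<N. rep_integral Mb hb (translated_integral Ma ha (indicator (A i))))"
        by (rule rep_integral_sum[OF rb])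
          (auto intro: bounded_borel_translated_integral[OF ra] bounded_borel_indicator Ab)
      finally show ?thesis using cn by simp
    qed
    moreover have
      "conv a b (\<Union>n. A n) = rep_integral Mb hb (translated_integral Ma ha (indicator (\<Union>n. A n)))"
      by (rule conv_eq_rep_integral[OF ra rb U])
    ultimately show "(\<lambda>n. conv a b (A n)) sums conv a b (\<Union>n. A n)" unfolding sums_def by simp
  qed
qed

lemma translated_integral_add:
  assumes r: "crep M h a" and "bounded_borel f" "bounded_borel g"
  shows "translated_integral M h (\<lambda>x. f x + g x) t = translated_integral M h f t
      + translated_integral M h g t"
  unfolding translated_integral_def
  by (rule rep_integral_add[OF r bounded_borel_translate[OF assms(2)]
          bounded_borel_translate[OF assms(3)]])

lemma translated_integral_cmult:
  assumes r: "crep M h a"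
  shows "translated_integral M h (\<lambda>x. c * f x) t = c * translated_integral M h f t"
  unfolding translated_integral_def by (rule rep_integral_cmult[OF r])

lemma cint_conv:
  assumes ra: "crep Ma ha a" and rb: "crep Mb hb b" and g: "bounded_borel g"
  shows "cint (conv a b) g = rep_integral Mb hb (translated_integral Ma ha g)"
proof -
  have a: "cmeas a" and b: "cmeas b" using crep_imp_cmeas ra rb by blast+
  obtain Mc hc where rc: "crep Mc hc (conv a b)" using cmeas_imp_crep[OF cmeas_conv[OF a b]]
    by blast
  define \<Phi> where "\<Phi> g = rep_integral Mc hc g - rep_integral Mb hb (translated_integral Ma ha g)"
    for g
  define K where "K = (LINT t|Mc. norm (hc t)) + (LINT t|Ma. norm (ha t))
      * (LINT t|Mb. norm (hb t))"
  have "\<Phi> g = 0"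
  proof (rule functional_eq_0_if_vanishes_on_indicators[where \<Phi>=\<Phi> and K=K])
    fix f g assume fg: "bounded_borel f" "bounded_borel g"
    have "translated_integral Ma ha (\<lambda>x. f x + g x) = (\<lambda>t. translated_integral Ma ha f t
        + translated_integral Ma ha g t)"
      using translated_integral_add[OF ra fg] by auto
    then show "\<Phi> (\<lambda>x. f x + g x) = \<Phi> f + \<Phi> g" unfolding \<Phi>_def
      using rep_integral_add[OF rc fg]
        rep_integral_add[OF rb bounded_borel_translated_integral[OF ra fg(1)]
          bounded_borel_translated_integral[OF ra fg(2)]] by simp
  next
    fix c f assume "bounded_borel f"
    have "translated_integral Ma ha (\<lambda>x. c * f x) = (\<lambda>t. c * translated_integral Ma ha f t)"
      using translated_integral_cmult[OF ra] by auto
    then show "\<Phi> (\<lambda>x. c * f x) = c * \<Phi> f" unfolding \<Phi>_def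
      using rep_integral_cmult[OF rc] rep_integral_cmult[OF rb] by (simp add: algebra_simps)
  next
    fix A :: "real set" assume A: "A \<in> sets borel"
    have AT: "bsetT (A \<inter> TT)" using A TT_borel unfolding bsetT_def by auto
    have "translated_integral Ma ha (indicator (A \<inter> TT)) = translated_integral Ma ha (indicator A)"
      unfolding translated_integral_def using tor_TT by (auto simp: indicator_def)
    then show "\<Phi> (indicator A) = 0" unfolding \<Phi>_def
      using rep_integral_indicator[OF rc A] conv_eq_rep_integral[OF ra rb AT] by simp
  next
    fix f C assume f: "bounded_borel f" "\<forall>x. norm (f x) \<le> C"
    have "norm (\<Phi> f) \<le> norm (rep_integral Mc hc f)
        + norm (rep_integral Mb hb (translated_integral Ma ha f))"
      unfolding \<Phi>_def by (rule norm_triangle_ineq4)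
    also have "\<dots> \<le> C * (LINT t|Mc. norm (hc t)) + (C * (LINT t|Ma. norm (ha t)))
        * (LINT t|Mb. norm (hb t))"
    proof (rule add_mono)
      show "norm (rep_integral Mc hc f) \<le> C * (LINT t|Mc. norm (hc t))"
        using rep_integral_norm_bound[OF rc f(1)] f(2) by auto
      show "norm (rep_integral Mb hb (translated_integral Ma ha f)) \<le> (C * (LINT t|Ma. norm (ha t)))
          * (LINT t|Mb. norm (hb t))"
        by (rule rep_integral_norm_bound[OF rb bounded_borel_translated_integral[OF ra f(1)]])
          (rule translated_integral_norm_bound[OF ra f(1)], use f(2) in auto)
    qed
    also have "\<dots> = K * C" unfolding K_def by (simp add: algebra_simps)
    finally show "norm (\<Phi> f) \<le> K * C" .
  qed (fact g)
  then show ?thesis unfolding \<Phi>_def using cint_eq_rep_integral[OF rc g] by simp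
qed

text \<open>Multiplicativity of the character; \<open>tor\<close> is invisible to it by periodicity.\<close>

lemma translated_integral_mult_character:
  assumes r: "crep M h a"
  shows "translated_integral M h (\<lambda>s. g s * character m s) t
    = character m t * translated_integral M (\<lambda>s. character m s * h s) g t"
proof -
  have "translated_integral M h (\<lambda>s. g s * character m s) t
      = rep_integral M h (\<lambda>s. character m t * (g (tor (s + t)) * character m s))"
    unfolding translated_integral_def by (simp add: character_tor character_add algebra_simps)
  also have "\<dots> = character m t * rep_integral M h (\<lambda>s. g (tor (s + t)) * character m s)"
    by (rule rep_integral_cmult[OF r])
  also have "rep_integral M h (\<lambda>s. g (tor (s + t)) * character m s)
      = translated_integral M (\<lambda>s. character m s * h s) g t"
    unfolding translated_integral_def rep_integral_def by (simp add: algebra_simps)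
  finally show ?thesis .
qed

lemma conv_Tshift:
  assumes a: "cmeas a" and b: "cmeas b"
  shows "conv (Tshift m a) (Tshift m b) = Tshift m (conv a b)"
proof
  fix E
  obtain Ma ha where ra: "crep Ma ha a" using cmeas_imp_crep[OF a] by blast
  obtain Mb hb where rb: "crep Mb hb b" using cmeas_imp_crep[OF b] by blast
  show "conv (Tshift m a) (Tshift m b) E = Tshift m (conv a b) E"
  proof (cases "bsetT E")
    case False then show ?thesis unfolding conv_def Tshift_eq_cint_character by simp
  next
    case True
    then have E: "bounded_borel (\<lambda>t. indicator E t * character m t)"
      by (intro bounded_borel_mult bounded_borel_indicator bounded_borel_character bsetT_borel)
    have "conv (Tshift m a) (Tshift m b) E
        = rep_integral Mb (\<lambda>t. character m t * hb t)
            (translated_integral Ma (\<lambda>t. character m t * ha t) (indicator E))"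
      by (rule conv_eq_rep_integral[OF crep_Tshift[OF ra] crep_Tshift[OF rb] True])
    also have "\<dots> = rep_integral Mb hb (translated_integral Ma ha (\<lambda>t. indicator E t
        * character m t))"
      unfolding rep_integral_def translated_integral_mult_character[OF ra]
      by (simp add: algebra_simps)
    also have "\<dots> = Tshift m (conv a b) E"
      unfolding Tshift_eq_cint_character using True cint_conv[OF ra rb E] by simp
    finally show ?thesis .
  qed
qed

section \<open>Spectra and spectral reasonableness\<close>

lemma cinvertible_Tshift:
  assumes x: "cmeas x" and inv: "cinvertible x"
  shows "cinvertible (Tshift m x)"
proof -
  obtain \<nu> where \<nu>: "cmeas \<nu>" "conv x \<nu> = delta0" "conv \<nu> x = delta0" using inv
    unfolding cinvertible_def by blast
  show ?thesis unfolding cinvertible_def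
  proof (intro exI[of _ "Tshift m \<nu>"] conjI)
    show "cmeas (Tshift m \<nu>)" by (rule cmeas_Tshift[OF \<nu>(1)])
    show "conv (Tshift m x) (Tshift m \<nu>) = delta0" using conv_Tshift[OF x \<nu>(1)] \<nu>(2) Tshift_delta0
      by simp
    show "conv (Tshift m \<nu>) (Tshift m x) = delta0" using conv_Tshift[OF \<nu>(1) x] \<nu>(3) Tshift_delta0
      by simp
  qed
qed

lemma Tshift_minus_delta0:
  assumes "cmeas \<mu>"
  shows "Tshift m (\<lambda>E. \<mu> E - z * delta0 E) = (\<lambda>E. Tshift m \<mu> E - z * delta0 E)"
proof -
  have "Tshift m (\<lambda>E. \<mu> E - z * delta0 E) = Tshift m (\<lambda>E. \<mu> E + (- z) * delta0 E)" by simp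
  also have "\<dots> = (\<lambda>E. Tshift m \<mu> E + (- z) * Tshift m delta0 E)"
    by (rule Tshift_linear_combination[OF assms cmeas_delta0])
  finally show ?thesis using Tshift_delta0 by simp
qed

lemma cspectrum_Tshift:
  assumes mu: "cmeas \<mu>"
  shows "cspectrum (Tshift m \<mu>) = cspectrum \<mu>"
proof -
  have c: "cmeas (\<lambda>E. \<mu> E - z * delta0 E)" for z
    using cmeas_linear_combination[OF mu cmeas_delta0, where c="- z"] by simp
  have c2: "cmeas (\<lambda>E. Tshift m \<mu> E - z * delta0 E)" for z
    using cmeas_linear_combination[OF cmeas_Tshift[OF mu] cmeas_delta0, where c="- z"] by simp
  have "cinvertible (\<lambda>E. Tshift m \<mu> E - z * delta0 E) \<longleftrightarrow> cinvertible (\<lambda>E. \<mu> E - z * delta0 E)" for z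
  proof
    assume "cinvertible (\<lambda>E. \<mu> E - z * delta0 E)"
    from cinvertible_Tshift[OF c this, of m] show "cinvertible (\<lambda>E. Tshift m \<mu> E - z * delta0 E)"
      using Tshift_minus_delta0[OF mu] by simp
  next
    assume "cinvertible (\<lambda>E. Tshift m \<mu> E - z * delta0 E)"
    from cinvertible_Tshift[OF c2 this, of "-m"]
    have "cinvertible (Tshift (-m) (\<lambda>E. Tshift m \<mu> E - z * delta0 E))" .
    also have "Tshift (-m) (\<lambda>E. Tshift m \<mu> E - z * delta0 E) = (\<lambda>E. Tshift (-m) (Tshift m \<mu>) E - z
        * delta0 E)"
      by (rule Tshift_minus_delta0[OF cmeas_Tshift[OF mu]])
    finally show "cinvertible (\<lambda>E. \<mu> E - z * delta0 E)" using Tshift_uminus_Tshift[OF mu] by simp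
  qed
  then show ?thesis unfolding cspectrum_def by auto
qed

lemma NN_Tshift:
  assumes "\<nu> \<in> NN"
  shows "Tshift m \<nu> \<in> NN"
proof -
  have c: "cmeas \<nu>" using assms unfolding NN_def by auto
  show ?thesis using assms unfolding NN_def
    using cmeas_Tshift[OF c] cspectrum_Tshift[OF c] range_fourier_Tshift[OF c] by auto
qed

lemma spec_reasonable_Tshift:
  assumes sr: "spec_reasonable \<mu>"
  shows "spec_reasonable (Tshift m \<mu>)"
proof -
  have mu: "cmeas \<mu>" using sr unfolding spec_reasonable_def by auto
  show ?thesis unfolding spec_reasonable_def
  proof (intro conjI ballI)
    show "cmeas (Tshift m \<mu>)" by (rule cmeas_Tshift[OF mu])
    fix \<nu> assume \<nu>: "\<nu> \<in> NN"
    have c: "cmeas \<nu>" using \<nu> unfolding NN_def by auto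
    have \<nu>': "Tshift (-m) \<nu> \<in> NN" by (rule NN_Tshift[OF \<nu>])
    have c': "cmeas (Tshift (-m) \<nu>)" by (rule cmeas_Tshift[OF c])
    have "(\<lambda>E. \<mu> E + Tshift (-m) \<nu> E) \<in> NN" using sr \<nu>' unfolding spec_reasonable_def by auto
    then have "Tshift m (\<lambda>E. \<mu> E + 1 * Tshift (-m) \<nu> E) \<in> NN" using NN_Tshift by simp
    also have "Tshift m (\<lambda>E. \<mu> E + 1 * Tshift (-m) \<nu> E) = (\<lambda>E. Tshift m \<mu> E + 1
        * Tshift m (Tshift (-m) \<nu>) E)"
      by (rule Tshift_linear_combination[OF mu c'])
    also have "Tshift m (Tshift (-m) \<nu>) = \<nu>" using Tshift_uminus_Tshift[OF c, of "-m"] by simp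
    finally show "(\<lambda>E. Tshift m \<mu> E + \<nu> E) \<in> NN" by simp
  qed
qed

theorem mainTheorem17:
  assumes "cmeas \<mu>"
  shows "spec_reasonable \<mu> \<longleftrightarrow> (\<forall>m::int. spec_reasonable (Tshift m \<mu>))"
proof
  assume "spec_reasonable \<mu>" then show "\<forall>m::int. spec_reasonable (Tshift m \<mu>)"
    using spec_reasonable_Tshift by blast
next
  assume "\<forall>m::int. spec_reasonable (Tshift m \<mu>)"
  then have "spec_reasonable (Tshift 0 \<mu>)" by blast
  then show "spec_reasonable \<mu>" using Tshift_0[OF assms] by simp
qed

end
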